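(* Let $W=\{1,\dots,m\}$, $f(x,i)=f_i(x)$, and let $x_*\in\operatorname{int}A$ be a locally optimal solution of problem $(\mathcal{P})$ at which Robinson's constraint qualification holds, and suppose $\Lambda(x_* )=\{\lambda_*\}$ for some $\lambda_*\in K^*$. Then for every $h\in C(x_* )$, $$\sup_{\alpha\in\alpha(x_*,\lambda_* )}\langle h,\nabla^2_{xx}\mathcal{L}(x_*,\lambda_*,\alpha)h\rangle-\sigma\big(\lambda_*,T^2_K(G(x_* ),DG(x_* )h)\big)\ge0.$$
   Context: Setting: $A\subseteq\mathbb{R}^d$ nonempty closed convex; $Y$ real Banach space with dual $Y^*$ and pairing $\langle\cdot,\cdot\rangle$; $K\subset Y$ nonempty closed convex cone; $f:\mathbb{R}^d\times W\to\mathbb{R}$ with $f(\cdot,i)=f_i$ differentiable and $G:\mathbb{R}^d\to Y$ continuously Fréchet differentiable; in addition $G$ is twice continuously Fréchet differentiable near $x_*$ and each $f_i$ twice continuously differentiable near $x_*$. $F(x)=\max_if_i(x)$, $W(x)=\{i:f_i(x)=F(x)\}$; $(\mathcal{P})$: minimise $F$ s.t. $G(x)\in K$, $x\in A$. Contingent cone $T_C(y)$: $h$ with $\alpha_n\downarrow0$, $h_n\to h$, $y+\alpha_nh_n\in C$. Robinson's constraint qualification: $0\in\operatorname{int}\{G(x_* )+DG(x_* )(A-x_* )-K\}$. $K^*=\{y^*:\langle y^*,y\rangle\le0\ \forall y\in K\}$. $\Lambda(x_* )$: set of $\lambda\in K^*$ with $\langle\lambda,G(x_* )\rangle=0$ and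 $[F+\langle\lambda,G\rangle]'(x_*,h)\ge0$ for all $h\in T_A(x_* )$. $\alpha(x_*,\lambda)$: set of $\alpha\in\mathbb{R}^m$, $\alpha^{(i)}\ge0$, $\alpha^{(i)}=0$ for $i\notin W(x_* )$, $\sum_i\alpha^{(i)}=1$, with $\langle\sum_i\alpha^{(i)}\nabla f_i(x_* ),h\rangle+\langle\lambda,DG(x_* )h\rangle\ge0$ for all $h\in T_A(x_* )$. $\langle h,\nabla^2_{xx}\mathcal{L}(x,\lambda,\alpha)h\rangle=\sum_i\alpha^{(i)}\langle h,\nabla^2f_i(x)h\rangle+\langle\lambda,D^2G(x)(h,h)\rangle$. Critical cone $C(x_* )=\{h\in T_A(x_* ):DG(x_* )h\in T_K(G(x_* )),\ \max_{i\in W(x_* )}\langle\nabla f_i(x_* ),h\rangle\le0\}$. $T^2_S(y,h)$: set of $w$ with $t_n>0$, $t_n\to0$, $\operatorname{dist}(y+t_nh+\frac12t_n^2w,S)=o(t_n^2)$. $\sigma(\lambda,S)=\sup_{y\in S}\langle\lambda,y\rangle$. *)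

theory Defs
  imports "HOL-Analysis.Analysis"
begin

definition contingent_cone :: "'a::real_normed_vector set \<Rightarrow> 'a \<Rightarrow> 'a set" where
  "contingent_cone C y = {h. \<exists>(\<alpha>::nat \<Rightarrow> real) hs.
      (\<forall>n. \<alpha> n > 0) \<and> decseq \<alpha> \<and> \<alpha> \<longlonglongrightarrow> 0 \<and> hs \<longlonglongrightarrow> h \<and>
      (\<forall>n. y + \<alpha> n *\<^sub>R hs n \<in> C)}"

definition second_order_tangent_set :: "'a::real_normed_vector set \<Rightarrow> 'a \<Rightarrow> 'a \<Rightarrow> 'a set" where
  "second_order_tangent_set S y h = {w. \<exists>t::nat \<Rightarrow> real.
      (\<forall>n. t n > 0) \<and> t \<longlonglongrightarrow> 0 \<and>
      (\<lambda>n. infdist (y + t n *\<^sub>R h + ((t n)\<^sup>2 / 2) *\<^sub>R w) S / (t n)\<^sup>2) \<longlonglongrightarrow> 0}"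

definition polar_cone :: "'b::real_normed_vector set \<Rightarrow> ('b \<Rightarrow>\<^sub>L real) set" where
  "polar_cone K = {l. \<forall>y\<in>K. blinfun_apply l y \<le> 0}"

text \<open>Support function sigma(l,S) = sup_{y in S} <l,y>, extended-real valued
  (-infinity for empty S, possibly +infinity).\<close>
definition support_fun :: "('b::real_normed_vector \<Rightarrow>\<^sub>L real) \<Rightarrow> 'b set \<Rightarrow> ereal" where
  "support_fun l S = (SUP y\<in>S. ereal (blinfun_apply l y))"

definition dir_deriv :: "('a::real_normed_vector \<Rightarrow> real) \<Rightarrow> 'a \<Rightarrow> 'a \<Rightarrow> real" where
  "dir_deriv \<phi> x h = Lim (at_right (0::real)) (\<lambda>t. (\<phi> (x + t *\<^sub>R h) - \<phi> x) / t)"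

definition maxfun :: "('a \<Rightarrow> nat \<Rightarrow> real) \<Rightarrow> nat \<Rightarrow> 'a \<Rightarrow> real" where
  "maxfun f m x = Max ((\<lambda>i. f x i) ` {1..m})"

definition active_set :: "('a \<Rightarrow> nat \<Rightarrow> real) \<Rightarrow> nat \<Rightarrow> 'a \<Rightarrow> nat set" where
  "active_set f m x = {i\<in>{1..m}. f x i = maxfun f m x}"

end

theory Submission
  imports Defs
begin

text \<open>Fix \<open>w\<close> in the second-order tangent set \<open>T\<^sup>2\<^sub>K(G x\<^sub>*, DG(x\<^sub>*) h)\<close>.
  Following the parabola \<open>x\<^sub>* + t h + t\<^sup>2/2 d\<close>, corrected back into the feasible set by the metric
  regularity that Robinson's condition provides, local optimality shows: whenever
  \<open>DG(x\<^sub>*) d + t (D\<^sup>2G(x\<^sub>*)(h,h) - w) \<in> K + \<real> G(x\<^sub>*)\<close> with \<open>t \<ge> 0\<close>, the maximum over active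
  \<open>i\<close> of \<open>\<langle>\<nabla>f\<^sub>i, d\<rangle> + t \<langle>h, \<nabla>\<^sup>2f\<^sub>i h\<rangle>\<close> is nonnegative.
  Hence the infimum of these maxima over all representations of \<open>y\<close> as
  \<open>DG(x\<^sub>*) d + t (D\<^sup>2G(x\<^sub>*)(h,h) - w) - k - s G(x\<^sub>*)\<close> is a finite sublinear function of \<open>y\<close>,
  bounded by a multiple of \<open>\<parallel>y\<parallel>\<close> (again by Robinson's condition).
  A linear minorant \<open>\<mu>\<close> from Hahn--Banach is then continuous, \<open>-\<mu>\<close> is a Lagrange multiplier and thus
  equals \<open>\<lambda>\<^sub>*\<close>, and separation in \<open>\<real>\<^sup>d \<times> \<real>\<close> turns \<open>\<mu> \<le> max\<close> into a convex combination
  \<open>\<alpha> \<in> \<alpha>(x\<^sub>*, \<lambda>\<^sub>*)\<close> with \<open>\<lambda>\<^sub>*(w) \<le> \<Sum> \<alpha>\<^sub>i \<langle>h, \<nabla>\<^sup>2f\<^sub>i h\<rangle> + \<lambda>\<^sub>*(D\<^sup>2G(x\<^sub>*)(h,h))\<close>.\<close>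

section \<open>Hahn--Banach for sublinear functionals\<close>

text \<open>Graphs of partially defined linear functionals dominated by \<open>p\<close>; a maximal one (Zorn) is
  total.\<close>
definition dominated_subspace :: "('b::real_vector \<Rightarrow> real) \<Rightarrow> ('b \<times> real) set \<Rightarrow> bool" where
  "dominated_subspace p H \<longleftrightarrow> subspace H \<and> (\<forall>(x, a)\<in>H. a \<le> p x)"

lemma dominated_subspace_single_valued:
  assumes H: "dominated_subspace p H" and p0: "p 0 = 0" and "(x, a) \<in> H" "(x, b) \<in> H"
  shows "a = b"
proof -
  have sub: "subspace H" and le: "\<And>y c. (y, c) \<in> H \<Longrightarrow> c \<le> p y"
    using H unfolding dominated_subspace_def by auto
  have "(0, a - b) \<in> H" "(0, b - a) \<in> H"
    using subspace_diff[OF sub \<open>(x, a) \<in> H\<close> \<open>(x, b) \<in> H\<close>]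
      subspace_diff[OF sub \<open>(x, b) \<in> H\<close> \<open>(x, a) \<in> H\<close>] by simp_all
  with le[of 0 "a - b"] le[of 0 "b - a"] p0 show ?thesis by simp
qed

lemma dominated_subspace_chain_Union:
  assumes C: "C \<in> chains {H. dominated_subspace p H}" "C \<noteq> {}"
  shows "dominated_subspace p (\<Union>C)"
proof -
  have chain: "\<And>X Y. X \<in> C \<Longrightarrow> Y \<in> C \<Longrightarrow> X \<subseteq> Y \<or> Y \<subseteq> X"
    and sub: "\<And>X. X \<in> C \<Longrightarrow> subspace X"
    and le: "\<And>X y c. X \<in> C \<Longrightarrow> (y, c) \<in> X \<Longrightarrow> c \<le> p y"
    using C(1) unfolding chains_def chain_subset_def dominated_subspace_def by blast+
  have "subspace (\<Union>C)"
    unfolding subspace_def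
  proof (intro conjI ballI allI)
    show "0 \<in> \<Union>C" using C(2) subspace_0[OF sub] by blast
  next
    fix u v assume "u \<in> \<Union>C" "v \<in> \<Union>C"
    then obtain X Y where "X \<in> C" "u \<in> X" "Y \<in> C" "v \<in> Y" by blast
    with chain[of X Y] subspace_add[OF sub] show "u + v \<in> \<Union>C" by blast
  next
    fix c :: real and u assume "u \<in> \<Union>C"
    with subspace_mul[OF sub] show "c *\<^sub>R u \<in> \<Union>C" by blast
  qed
  with le show ?thesis unfolding dominated_subspace_def by blast
qed

lemma subspace_add_line:
  assumes "subspace M"
  shows "subspace {u + s *\<^sub>R v | u s. u \<in> M}"
proof -
  have "{u + s *\<^sub>R v | u s. u \<in> M} = {x + y | x y. x \<in> M \<and> y \<in> span {v}}"
    by (auto simp: span_singleton)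
  then show ?thesis using subspace_sums[OF assms subspace_span] by simp
qed

lemma sublinear_extension_constant:
  fixes p :: "'b::real_vector \<Rightarrow> real"
  assumes sub: "\<And>x y. p (x + y) \<le> p x + p y" and M: "dominated_subspace p M"
  shows "\<exists>c. \<forall>x a y b. (x, a) \<in> M \<longrightarrow> (y, b) \<in> M \<longrightarrow> a - p (x - x0) \<le> c \<and> c \<le> p (y + x0) - b"
proof -
  have subM: "subspace M" and leM: "\<And>x a. (x, a) \<in> M \<Longrightarrow> a \<le> p x"
    using M unfolding dominated_subspace_def by auto
  have M0: "(0, 0) \<in> M" using subspace_0[OF subM] by (simp add: zero_prod_def)
  define S where "S = {a - p (x - x0) | x a. (x, a) \<in> M}"
  have S_le: "s \<le> p (y + x0) - b" if "s \<in> S" "(y, b) \<in> M" for s y b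
  proof -
    obtain x a where xa: "(x, a) \<in> M" "s = a - p (x - x0)" using \<open>s \<in> S\<close> unfolding S_def by blast
    have "(x + y, a + b) \<in> M" using subspace_add[OF subM xa(1) that(2)] by simp
    hence "a + b \<le> p (x + y)" by (rule leM)
    also have "\<dots> \<le> p (x - x0) + p (y + x0)" using sub[of "x - x0" "y + x0"] by simp
    finally show ?thesis using xa by simp
  qed
  have "a - p (x - x0) \<le> Sup S" if "(x, a) \<in> M" for x a
    using that S_le[of _ 0 0] M0 by (intro cSup_upper) (auto simp: S_def bdd_above_def)
  moreover have "Sup S \<le> p (y + x0) - b" if "(y, b) \<in> M" for y b
    using M0 S_le that by (intro cSup_least) (auto simp: S_def)
  ultimately show ?thesis by blast
qed

lemma dominated_subspace_extend:
  fixes p :: "'b::real_vector \<Rightarrow> real"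
  assumes sub: "\<And>x y. p (x + y) \<le> p x + p y"
    and hom: "\<And>c x. c > 0 \<Longrightarrow> p (c *\<^sub>R x) = c * p x"
    and M: "dominated_subspace p M"
  shows "\<exists>c. dominated_subspace p {u + s *\<^sub>R (x0, c) | u s. u \<in> M}"
proof -
  have subM: "subspace M" and leM: "\<And>x a. (x, a) \<in> M \<Longrightarrow> a \<le> p x"
    using M unfolding dominated_subspace_def by auto
  obtain c where c_lower: "\<And>x a. (x, a) \<in> M \<Longrightarrow> a - p (x - x0) \<le> c"
    and c_upper: "\<And>y b. (y, b) \<in> M \<Longrightarrow> c \<le> p (y + x0) - b"
    using sublinear_extension_constant[OF sub M, of x0] by blast
  have "a \<le> p x" if xa: "(x, a) \<in> {u + s *\<^sub>R (x0, c) | u s. u \<in> M}" for x a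
  proof -
    obtain x1 a1 s where 1: "(x1, a1) \<in> M" "x = x1 + s *\<^sub>R x0" "a = a1 + s * c"
      using xa by auto
    have M_scaled: "((1/\<bar>s\<bar>) *\<^sub>R x1, (1/\<bar>s\<bar>) * a1) \<in> M"
      using subspace_mul[OF subM 1(1), of "1/\<bar>s\<bar>"] by simp
    consider "s = 0" | "s > 0" | "s < 0" by linarith
    then show ?thesis
    proof cases
      case 1 with \<open>(x1, a1) \<in> M\<close> \<open>x = x1 + s *\<^sub>R x0\<close> \<open>a = a1 + s * c\<close> leM show ?thesis by simp
    next
      case pos: 2
      have "s * c \<le> s * p ((1/s) *\<^sub>R x1 + x0) - a1"
        using c_upper[OF M_scaled] pos by (simp add: field_simps)
      also have "s * p ((1/s) *\<^sub>R x1 + x0) = p x"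
        using hom[OF pos, of "(1/s) *\<^sub>R x1 + x0"] pos 1(2) by (simp add: algebra_simps)
      finally show ?thesis using 1(3) by simp
    next
      case neg: 3
      have "a1 - \<bar>s\<bar> * p ((1/\<bar>s\<bar>) *\<^sub>R x1 - x0) \<le> \<bar>s\<bar> * c"
        using c_lower[OF M_scaled] neg by (simp add: field_simps)
      also have "\<bar>s\<bar> * p ((1/\<bar>s\<bar>) *\<^sub>R x1 - x0) = p x"
        using hom[of "\<bar>s\<bar>" "(1/\<bar>s\<bar>) *\<^sub>R x1 - x0"] neg 1(2) by (simp add: algebra_simps)
      finally show ?thesis using 1(3) neg by simp
    qed
  qed
  with subspace_add_line[OF subM] show ?thesis unfolding dominated_subspace_def by blast
qed

lemma hahn_banach_sublinear:
  fixes p :: "'b::real_vector \<Rightarrow> real"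
  assumes sub: "\<And>x y. p (x + y) \<le> p x + p y"
    and hom: "\<And>c x. c > 0 \<Longrightarrow> p (c *\<^sub>R x) = c * p x"
  shows "\<exists>\<mu>. linear \<mu> \<and> (\<forall>x. \<mu> x \<le> p x)"
proof -
  have p0: "p 0 = 0" using hom[of 2 0] by simp
  have "dominated_subspace p {0}"
    unfolding dominated_subspace_def using p0 subspace_single_0 by (simp add: case_prod_beta)
  then have "\<exists>M\<in>{H. dominated_subspace p H}. \<forall>X\<in>{H. dominated_subspace p H}. M \<subseteq> X \<longrightarrow> X = M"
    by (intro Zorn_Lemma2 ballI) (metis Union_upper dominated_subspace_chain_Union empty_iff mem_Collect_eq)
  then obtain M where M: "dominated_subspace p M"
    and maximal: "\<And>X. dominated_subspace p X \<Longrightarrow> M \<subseteq> X \<Longrightarrow> X = M" by blast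
  have total: "\<exists>a. (x, a) \<in> M" for x
  proof -
    obtain c where H: "dominated_subspace p {u + s *\<^sub>R (x, c) | u s. u \<in> M}"
      using dominated_subspace_extend[OF sub hom M] by blast
    have "M \<subseteq> {u + s *\<^sub>R (x, c) | u s. u \<in> M}"
    proof
      fix u assume "u \<in> M"
      then show "u \<in> {u + s *\<^sub>R (x, c) | u s. u \<in> M}"
        by (intro CollectI exI[of _ u] exI[of _ "0::real"]) (simp add: zero_prod_def)
    qed
    then have extension_eq: "{u + s *\<^sub>R (x, c) | u s. u \<in> M} = M" using maximal[OF H] by blast
    have "0 \<in> M" using M subspace_0 unfolding dominated_subspace_def by blast
    then have "(x, c) \<in> {u + s *\<^sub>R (x, c) | u s. u \<in> M}"
      by (intro CollectI exI[of _ 0] exI[of _ "1::real"]) simp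
    with extension_eq show ?thesis by blast
  qed
  define \<mu> where "\<mu> x = (THE a. (x, a) \<in> M)" for x
  have graph: "(x, \<mu> x) \<in> M" for x
    using total[of x] dominated_subspace_single_valued[OF M p0] unfolding \<mu>_def
    by (metis (mono_tags, lifting) theI)
  have \<mu>_eq: "\<mu> x = a" if "(x, a) \<in> M" for x a
    using dominated_subspace_single_valued[OF M p0 that graph] by simp
  have subM: "subspace M" using M unfolding dominated_subspace_def by blast
  have "linear \<mu>"
    by (rule linearI; rule \<mu>_eq) (use subspace_add[OF subM graph graph] subspace_mul[OF subM graph] in simp_all)
  moreover have "\<mu> x \<le> p x" for x using M graph unfolding dominated_subspace_def by blast
  ultimately show ?thesis by blast
qed

section \<open>Openness under Robinson's condition\<close>

lemma convex_cone_add_mem: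
  assumes "convex K" "cone K" "x \<in> K" "y \<in> K"
  shows "x + y \<in> K"
  using assms convex_cone by blast

definition bounded_robinson_set :: "('a::real_normed_vector \<Rightarrow>\<^sub>L 'b::real_normed_vector) \<Rightarrow> 'b set \<Rightarrow> 'b \<Rightarrow> real \<Rightarrow> 'b set" where
  "bounded_robinson_set L K y0 r =
     {blinfun_apply L e - k + s *\<^sub>R y0 | e k s. norm e \<le> r \<and> k \<in> K \<and> \<bar>s\<bar> \<le> r}"

lemma bounded_robinson_setI:
  "norm e \<le> r \<Longrightarrow> k \<in> K \<Longrightarrow> \<bar>s\<bar> \<le> r \<Longrightarrow> blinfun_apply L e - k + s *\<^sub>R y0 \<in> bounded_robinson_set L K y0 r"
  unfolding bounded_robinson_set_def by blast

lemma bounded_robinson_set_mono: "r \<le> r' \<Longrightarrow> bounded_robinson_set L K y0 r \<subseteq> bounded_robinson_set L K y0 r'"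
  unfolding bounded_robinson_set_def by force

lemma closed_bounded_robinson_set:
  fixes L :: "'a::euclidean_space \<Rightarrow>\<^sub>L 'b::real_normed_vector"
  assumes "closed K"
  shows "closed (bounded_robinson_set L K y0 r)"
proof -
  let ?T = "(\<lambda>z. blinfun_apply L (fst z) + snd z *\<^sub>R y0) ` (cball 0 r \<times> cball 0 r)"
  have "compact ?T"
    by (intro compact_continuous_image compact_Times compact_cball continuous_intros)
  moreover have "closed (uminus ` K)" using assms by (simp add: closed_negations)
  ultimately have "closed (\<Union>x\<in> uminus ` K. \<Union>y \<in> ?T. {x + y})" by (intro closed_compact_sums)
  moreover have "(\<Union>x\<in> uminus ` K. \<Union>y \<in> ?T. {x + y}) = bounded_robinson_set L K y0 r"
  proof (intro equalityI subsetI)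
    fix z assume "z \<in> (\<Union>x\<in> uminus ` K. \<Union>y \<in> ?T. {x + y})"
    then obtain k p where k: "k \<in> K" and p: "p \<in> cball 0 r \<times> cball 0 r"
      and z: "z = - k + (blinfun_apply L (fst p) + snd p *\<^sub>R y0)"
      by blast
    from p have "norm (fst p) \<le> r" "\<bar>snd p\<bar> \<le> r" by (auto simp: mem_Times_iff)
    with k have "blinfun_apply L (fst p) - k + snd p *\<^sub>R y0 \<in> bounded_robinson_set L K y0 r"
      by (intro bounded_robinson_setI)
    moreover have "z = blinfun_apply L (fst p) - k + snd p *\<^sub>R y0"
      unfolding z by (simp add: algebra_simps)
    ultimately show "z \<in> bounded_robinson_set L K y0 r" by simp
  next
    fix z assume "z \<in> bounded_robinson_set L K y0 r"
    then obtain k e s where eks: "k \<in> K" "norm e \<le> r" "\<bar>s\<bar> \<le> r"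
      "z = blinfun_apply L e - k + s *\<^sub>R y0"
      unfolding bounded_robinson_set_def by blast
    have "- k \<in> uminus ` K" using eks(1) by blast
    moreover have "blinfun_apply L e + s *\<^sub>R y0 \<in> ?T"
      by (rule rev_image_eqI[of "(e, s)"]) (use eks(2,3) in auto)
    ultimately have "- k + (blinfun_apply L e + s *\<^sub>R y0) \<in> (\<Union>x\<in> uminus ` K. \<Union>y \<in> ?T. {x + y})"
      by blast
    moreover have "z = - k + (blinfun_apply L e + s *\<^sub>R y0)"
      using eks(4) by (simp add: algebra_simps)
    ultimately show "z \<in> (\<Union>x\<in> uminus ` K. \<Union>y \<in> ?T. {x + y})" by (simp only:)
  qed
  ultimately show ?thesis by simp
qed

lemma convex_bounded_robinson_set:
  assumes "convex K"
  shows "convex (bounded_robinson_set L K y0 r)"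
  unfolding convex_def
proof (intro ballI allI impI)
  fix x y and u v :: real
  assume x: "x \<in> bounded_robinson_set L K y0 r" and y: "y \<in> bounded_robinson_set L K y0 r"
    and uv: "0 \<le> u" "0 \<le> v" "u + v = 1"
  obtain e1 k1 s1 where 1: "x = blinfun_apply L e1 - k1 + s1 *\<^sub>R y0" "norm e1 \<le> r" "k1 \<in> K" "\<bar>s1\<bar> \<le> r"
    using x unfolding bounded_robinson_set_def by blast
  obtain e2 k2 s2 where 2: "y = blinfun_apply L e2 - k2 + s2 *\<^sub>R y0" "norm e2 \<le> r" "k2 \<in> K" "\<bar>s2\<bar> \<le> r"
    using y unfolding bounded_robinson_set_def by blast
  have eq: "u *\<^sub>R x + v *\<^sub>R y
      = blinfun_apply L (u *\<^sub>R e1 + v *\<^sub>R e2) - (u *\<^sub>R k1 + v *\<^sub>R k2) + (u * s1 + v * s2) *\<^sub>R y0"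
    unfolding 1(1) 2(1) by (simp add: algebra_simps blinfun.add_right blinfun.scaleR_right)
  have "norm (u *\<^sub>R e1 + v *\<^sub>R e2) \<le> r"
    using convex_bound_le[of "norm e1" r "norm e2" u v] norm_triangle_ineq[of "u *\<^sub>R e1" "v *\<^sub>R e2"] 1 2 uv
    by simp
  moreover have "u *\<^sub>R k1 + v *\<^sub>R k2 \<in> K" by (rule convexD[OF assms 1(3) 2(3) uv])
  moreover have "\<bar>u * s1 + v * s2\<bar> \<le> r"
    using convex_bound_le[of "\<bar>s1\<bar>" r "\<bar>s2\<bar>" u v] abs_triangle_ineq[of "u * s1" "v * s2"] 1 2 uv
    by (simp add: abs_mult)
  ultimately show "u *\<^sub>R x + v *\<^sub>R y \<in> bounded_robinson_set L K y0 r"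
    unfolding eq by (rule bounded_robinson_setI)
qed

lemma bounded_robinson_sets_cover:
  assumes "cone K" "K \<noteq> {}"
    and RCQ: "0 \<in> interior {y0 + blinfun_apply L e - k | e k. k \<in> K}"
  shows "\<exists>n::nat. y \<in> bounded_robinson_set L K y0 n"
proof (cases "y = 0")
  case True
  have "0 \<in> K" using assms cone_contains_0 by blast
  then have "blinfun_apply L 0 - 0 + 0 *\<^sub>R y0 \<in> bounded_robinson_set L K y0 (real 0)"
    by (intro bounded_robinson_setI) auto
  with True show ?thesis by (intro exI[of _ 0]) simp
next
  case False
  obtain \<delta> where \<delta>: "\<delta> > 0" "ball 0 \<delta> \<subseteq> {y0 + blinfun_apply L e - k | e k. k \<in> K}"
    using RCQ by (meson mem_interior)
  define c where "c = 2 * norm y / \<delta>"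
  have c: "c > 0" using False \<delta> by (simp add: c_def)
  have "(1/c) *\<^sub>R y \<in> ball 0 \<delta>" using False \<delta> by (simp add: c_def)
  then obtain e k where ek: "(1/c) *\<^sub>R y = y0 + blinfun_apply L e - k" "k \<in> K" using \<delta> by blast
  have "y = c *\<^sub>R ((1/c) *\<^sub>R y)" using c by simp
  also have "\<dots> = blinfun_apply L (c *\<^sub>R e) - c *\<^sub>R k + c *\<^sub>R y0"
    unfolding ek(1) by (simp add: algebra_simps blinfun.scaleR_right)
  finally have y: "y = blinfun_apply L (c *\<^sub>R e) - c *\<^sub>R k + c *\<^sub>R y0" .
  obtain n :: nat where n: "max (norm (c *\<^sub>R e)) c \<le> n" using real_arch_simple by blast
  have "c *\<^sub>R k \<in> K" using \<open>cone K\<close> ek c by (simp add: mem_cone)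
  then have "y \<in> bounded_robinson_set L K y0 n"
    unfolding y using n c by (intro bounded_robinson_setI) auto
  thus ?thesis by blast
qed

text \<open>Baire's theorem: some of the closed sets covering the space has an interior point; being
  convex and containing the antipode of that point, it then contains a ball around the origin.\<close>
lemma ball_subset_bounded_robinson_set:
  fixes L :: "'a::euclidean_space \<Rightarrow>\<^sub>L 'b::banach"
  assumes "closed K" "convex K" "cone K" "K \<noteq> {}"
    and RCQ: "0 \<in> interior {y0 + blinfun_apply L e - k | e k. k \<in> K}"
  shows "\<exists>N::nat. \<exists>\<rho>>0. ball 0 \<rho> \<subseteq> bounded_robinson_set L K y0 N"
proof -
  let ?S = "\<lambda>n::nat. bounded_robinson_set L K y0 n"
  have cover: "\<exists>n. y \<in> ?S n" for y
    using bounded_robinson_sets_cover[OF assms(3,4) RCQ] .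
  have "\<exists>n. interior (?S n) \<noteq> {}"
  proof (rule ccontr)
    assume "\<not> ?thesis"
    then have no_interior: "interior (?S n) = {}" for n by blast
    have "euclidean interior_of \<Union>(range ?S) = {}"
    proof (rule Baire_category_alt)
      show "completely_metrizable_space (euclidean :: 'b topology) \<or>
          locally_compact_space (euclidean :: 'b topology) \<and> regular_space (euclidean :: 'b topology)"
        using completely_metrizable_space_euclidean by blast
      show "countable (range ?S)" by simp
      fix T assume "T \<in> range ?S"
      then obtain n where T: "T = ?S n" by blast
      show "closedin euclidean T \<and> euclidean interior_of T = {}"
        unfolding T using closed_bounded_robinson_set[OF \<open>closed K\<close>] no_interior[of n] closed_closedin
        by auto
    qed
    moreover have "\<Union>(range ?S) = UNIV" using cover by blast
    ultimately show False by simp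
  qed
  then obtain n z where "z \<in> interior (?S n)" by blast
  then obtain \<rho> where z: "\<rho> > 0" "ball z \<rho> \<subseteq> ?S n" by (meson mem_interior)
  obtain n' where n': "- z \<in> ?S n'" using cover by blast
  define N where "N = max n n'"
  have "?S n \<subseteq> ?S N" "?S n' \<subseteq> ?S N"
    by (simp_all add: N_def bounded_robinson_set_mono)
  with z n' have SN: "ball z \<rho> \<subseteq> ?S N" "- z \<in> ?S N" by blast+
  have "ball 0 (\<rho>/2) \<subseteq> ?S N"
  proof
    fix y :: 'b assume "y \<in> ball 0 (\<rho>/2)"
    then have "z + 2 *\<^sub>R y \<in> ball z \<rho>" by (simp add: dist_norm)
    with SN have "z + 2 *\<^sub>R y \<in> ?S N" by blast
    then have "(1/2) *\<^sub>R (z + 2 *\<^sub>R y) + (1/2) *\<^sub>R (- z) \<in> ?S N"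
      by (rule convexD[OF convex_bounded_robinson_set[OF \<open>convex K\<close>] _ SN(2)]) auto
    then show "y \<in> ?S N" by (simp add: algebra_simps)
  qed
  moreover have "\<rho>/2 > 0" using z(1) by simp
  ultimately show ?thesis by blast
qed

lemma robinson_openness:
  fixes L :: "'a::euclidean_space \<Rightarrow>\<^sub>L 'b::banach"
  assumes "closed K" "convex K" "cone K" "K \<noteq> {}"
    and RCQ: "0 \<in> interior {y0 + blinfun_apply L e - k | e k. k \<in> K}"
  shows "\<exists>M>0. \<forall>y. \<exists>e k s. y = blinfun_apply L e - k + s *\<^sub>R y0 \<and> k \<in> K \<and>
           norm e \<le> M * norm y \<and> \<bar>s\<bar> \<le> M * norm y"
proof -
  obtain N :: nat and \<rho> where \<rho>: "\<rho> > 0" and ball: "ball 0 \<rho> \<subseteq> bounded_robinson_set L K y0 N"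
    using ball_subset_bounded_robinson_set[OF assms] by blast
  define M where "M = 2 * (N + 1) / \<rho>"
  have "\<exists>e k s. y = blinfun_apply L e - k + s *\<^sub>R y0 \<and> k \<in> K \<and> norm e \<le> M * norm y \<and> \<bar>s\<bar> \<le> M * norm y"
    for y
  proof (cases "y = 0")
    case True
    have "0 \<in> K" using assms cone_contains_0 by blast
    with True show ?thesis by (intro exI[of _ 0] exI[of _ "0::real"]) simp
  next
    case False
    define c where "c = 2 * norm y / \<rho>"
    have c: "c > 0" using False \<rho> by (simp add: c_def)
    have "(1/c) *\<^sub>R y \<in> ball 0 \<rho>" using False \<rho> by (simp add: c_def)
    then obtain e k s where eks: "(1/c) *\<^sub>R y = blinfun_apply L e - k + s *\<^sub>R y0" "k \<in> K"
      "norm e \<le> N" "\<bar>s\<bar> \<le> N"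
      using ball unfolding bounded_robinson_set_def by blast
    have "y = c *\<^sub>R ((1/c) *\<^sub>R y)" using c by simp
    also have "\<dots> = blinfun_apply L (c *\<^sub>R e) - c *\<^sub>R k + (c * s) *\<^sub>R y0"
      unfolding eks(1) by (simp add: algebra_simps blinfun.scaleR_right)
    finally have y: "y = blinfun_apply L (c *\<^sub>R e) - c *\<^sub>R k + (c * s) *\<^sub>R y0" .
    have "c * N \<le> c * (N + 1)" using c by simp
    also have "\<dots> = M * norm y" by (simp add: M_def c_def)
    finally have cN: "c * N \<le> M * norm y" .
    have "norm (c *\<^sub>R e) \<le> M * norm y"
      using order_trans[OF mult_left_mono[OF eks(3), of c] cN] c by simp
    moreover have "\<bar>c * s\<bar> \<le> M * norm y"
      using order_trans[OF mult_left_mono[OF eks(4), of c] cN] c by (simp add: abs_mult)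
    moreover have "c *\<^sub>R k \<in> K" using \<open>cone K\<close> eks(2) c by (simp add: mem_cone)
    ultimately show ?thesis using y by blast
  qed
  moreover have "M > 0" using \<rho> by (simp add: M_def)
  ultimately show ?thesis by blast
qed

section \<open>Metric regularity\<close>

lemma linearization_error_bound:
  fixes G :: "'a::real_normed_vector \<Rightarrow> 'b::real_normed_vector"
  assumes G_diff: "\<And>x. (G has_derivative blinfun_apply (DG x)) (at x)"
    and B: "\<And>x. x \<in> ball x0 r \<Longrightarrow> norm (DG x - DG x0) \<le> B"
    and x: "x \<in> ball x0 r" and xe: "x + e \<in> ball x0 r"
  shows "norm (G (x + e) - G x - blinfun_apply (DG x0) e) \<le> norm e * B"
proof -
  have "x + t *\<^sub>R ((x + e) - x) \<in> ball x0 r" if "t \<in> {0..1}" for t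
    using convexD_alt[OF convex_ball x xe, of t] that by (simp add: algebra_simps)
  moreover have "(G has_derivative blinfun_apply (DG y)) (at y within ball x0 r)" for y
    using G_diff by (rule has_derivative_at_withinI)
  moreover have "onorm (blinfun_apply (DG y) - blinfun_apply (DG x0)) \<le> B" if "y \<in> ball x0 r" for y
  proof -
    have "blinfun_apply (DG y) - blinfun_apply (DG x0) = blinfun_apply (DG y - DG x0)"
      by (simp add: fun_eq_iff blinfun.diff_left)
    with B[OF that] show ?thesis by (simp add: norm_blinfun.rep_eq)
  qed
  moreover have "x0 \<in> ball x0 r"
    using le_less_trans[OF zero_le_dist x[unfolded mem_ball]] by simp
  ultimately have "norm (G (x + e) - G x - blinfun_apply (DG x0) ((x + e) - x)) \<le> norm ((x + e) - x) * B"
    by (rule differentiable_bound_linearization)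
  then show ?thesis by simp
qed

lemma convergent_if_geometric_increments:
  fixes a :: "nat \<Rightarrow> 'c::banach"
  assumes "\<And>n. norm (a (Suc n) - a n) \<le> C * (1/2)^n"
  shows "convergent a"
proof -
  have "summable (\<lambda>n. C * (1/2::real)^n)" by (intro summable_mult summable_geometric) simp
  then have "summable (\<lambda>n. norm (a (Suc n) - a n))"
    by (rule summable_comparison_test') (use assms in auto)
  then have "summable (\<lambda>n. a (Suc n) - a n)" by (rule summable_norm_cancel)
  then have "(\<lambda>n. a 0 + (\<Sum>i<n. a (Suc i) - a i)) \<longlonglongrightarrow> a 0 + (\<Sum>n. a (Suc n) - a n)"
    by (intro tendsto_add tendsto_const summable_LIMSEQ)
  moreover have "(\<lambda>n. a 0 + (\<Sum>i<n. a (Suc i) - a i)) = a"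
    by (simp add: sum_lessThan_telescope)
  ultimately show ?thesis unfolding convergent_def by auto
qed

text \<open>Lyusternik's iteration: if a feasibility residual can always be halved by moves proportional
  to it, the moves form a geometric series.\<close>
lemma lyusternik_sequence:
  fixes G :: "'a::real_normed_vector \<Rightarrow> 'b::real_normed_vector"
  assumes "M \<ge> 0" "C \<ge> 0" and z\<^sub>0: "z\<^sub>0 \<in> K"
    and step: "\<And>x z. z \<in> K \<Longrightarrow> norm (x - x\<^sub>0) \<le> 2 * M * norm (G x\<^sub>0 - z\<^sub>0) \<Longrightarrow>
        norm (z - z\<^sub>0) \<le> 2 * C * norm (G x\<^sub>0 - z\<^sub>0) \<Longrightarrow> norm (G x - z) \<le> norm (G x\<^sub>0 - z\<^sub>0) \<Longrightarrow>
        \<exists>x' z'. z' \<in> K \<and> norm (G x' - z') \<le> norm (G x - z) / 2 \<and>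
          norm (x' - x) \<le> M * norm (G x - z) \<and> norm (z' - z) \<le> C * norm (G x - z)"
  shows "\<exists>xx zz. \<forall>n. zz n \<in> K \<and> norm (G (xx n) - zz n) \<le> (1/2)^n * norm (G x\<^sub>0 - z\<^sub>0) \<and>
    norm (xx n - x\<^sub>0) \<le> 2 * M * norm (G x\<^sub>0 - z\<^sub>0) \<and>
    norm (xx (Suc n) - xx n) \<le> (M * norm (G x\<^sub>0 - z\<^sub>0)) * (1/2)^n \<and>
    norm (zz (Suc n) - zz n) \<le> (C * norm (G x\<^sub>0 - z\<^sub>0)) * (1/2)^n"
proof -
  define R where "R = norm (G x\<^sub>0 - z\<^sub>0)"
  define improves where "improves p p' \<longleftrightarrow> snd p' \<in> K \<and>
      norm (G (fst p') - snd p') \<le> norm (G (fst p) - snd p) / 2 \<and>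
      norm (fst p' - fst p) \<le> M * norm (G (fst p) - snd p) \<and>
      norm (snd p' - snd p) \<le> C * norm (G (fst p) - snd p)" for p p'
  define seq where "seq = rec_nat (x\<^sub>0, z\<^sub>0) (\<lambda>_ p. SOME p'. improves p p')"
  define xx where "xx n = fst (seq n)" for n
  define zz where "zz n = snd (seq n)" for n
  define inv where "inv n \<longleftrightarrow> zz n \<in> K \<and> norm (G (xx n) - zz n) \<le> (1/2)^n * R \<and>
      norm (xx n - x\<^sub>0) \<le> 2 * M * R * (1 - (1/2)^n) \<and> norm (zz n - z\<^sub>0) \<le> 2 * C * R * (1 - (1/2)^n)" for n
  have R: "R \<ge> 0" by (simp add: R_def)
  have shrink: "2 * M * R * (1 - (1/2)^n) \<le> 2 * M * R" "2 * C * R * (1 - (1/2)^n) \<le> 2 * C * R"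
    "(1/2)^n * R \<le> R" for n
  proof -
    have q: "(1/2::real)^n \<le> 1" "(0::real) \<le> (1/2)^n" by (simp_all add: power_le_one)
    then show "2 * M * R * (1 - (1/2)^n) \<le> 2 * M * R" "2 * C * R * (1 - (1/2)^n) \<le> 2 * C * R"
      "(1/2)^n * R \<le> R"
      using \<open>M \<ge> 0\<close> \<open>C \<ge> 0\<close> R by (simp_all add: mult_left_le mult_left_le_one_le)
  qed
  have step_improves: "improves (seq n) (seq (Suc n))" if "inv n" for n
  proof -
    from shrink[of n] have "norm (xx n - x\<^sub>0) \<le> 2 * M * R" "norm (zz n - z\<^sub>0) \<le> 2 * C * R" "norm (G (xx n) - zz n) \<le> R"
      using that unfolding inv_def by linarith+
    then have "\<exists>p'. improves (seq n) p'"
      using step[of "zz n" "xx n"] that unfolding inv_def improves_def xx_def zz_def R_def by force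
    then show ?thesis by (simp add: seq_def someI_ex)
  qed
  have invariant: "inv n" for n
  proof (induction n)
    case 0 show ?case using z\<^sub>0 by (simp add: inv_def xx_def zz_def seq_def R_def)
  next
    case (Suc n)
    then have imp: "improves (seq n) (seq (Suc n))" by (rule step_improves)
    have r: "norm (G (xx n) - zz n) \<le> (1/2)^n * R" using Suc by (simp add: inv_def)
    have "norm (xx (Suc n) - x\<^sub>0) \<le> norm (xx (Suc n) - xx n) + norm (xx n - x\<^sub>0)"
      using norm_triangle_ineq[of "xx (Suc n) - xx n" "xx n - x\<^sub>0"] by simp
    also have "\<dots> \<le> M * ((1/2)^n * R) + 2 * M * R * (1 - (1/2)^n)"
      using imp Suc mult_left_mono[OF r \<open>M \<ge> 0\<close>] unfolding improves_def inv_def xx_def zz_def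
      by (intro add_mono) auto
    also have "\<dots> = 2 * M * R * (1 - (1/2)^Suc n)" by (simp add: algebra_simps)
    finally have x: "norm (xx (Suc n) - x\<^sub>0) \<le> 2 * M * R * (1 - (1/2)^Suc n)" .
    have "norm (zz (Suc n) - z\<^sub>0) \<le> norm (zz (Suc n) - zz n) + norm (zz n - z\<^sub>0)"
      using norm_triangle_ineq[of "zz (Suc n) - zz n" "zz n - z\<^sub>0"] by simp
    also have "\<dots> \<le> C * ((1/2)^n * R) + 2 * C * R * (1 - (1/2)^n)"
      using imp Suc mult_left_mono[OF r \<open>C \<ge> 0\<close>] unfolding improves_def inv_def xx_def zz_def
      by (intro add_mono) auto
    also have "\<dots> = 2 * C * R * (1 - (1/2)^Suc n)" by (simp add: algebra_simps)
    finally have z: "norm (zz (Suc n) - z\<^sub>0) \<le> 2 * C * R * (1 - (1/2)^Suc n)" .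
    have "norm (G (xx (Suc n)) - zz (Suc n)) \<le> (1/2)^Suc n * R"
      using imp r unfolding improves_def xx_def zz_def by simp
    with x z imp show ?case unfolding inv_def improves_def zz_def by simp
  qed
  have increments: "norm (xx (Suc n) - xx n) \<le> (M * R) * (1/2)^n"
    "norm (zz (Suc n) - zz n) \<le> (C * R) * (1/2)^n" for n
  proof -
    have imp: "improves (seq n) (seq (Suc n))" by (rule step_improves[OF invariant])
    have r: "norm (G (xx n) - zz n) \<le> (1/2)^n * R" using invariant[of n] by (simp add: inv_def)
    show "norm (xx (Suc n) - xx n) \<le> (M * R) * (1/2)^n"
      using imp mult_left_mono[OF r \<open>M \<ge> 0\<close>] unfolding improves_def xx_def zz_def by (simp add: ac_simps)
    show "norm (zz (Suc n) - zz n) \<le> (C * R) * (1/2)^n"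
      using imp mult_left_mono[OF r \<open>C \<ge> 0\<close>] unfolding improves_def xx_def zz_def by (simp add: ac_simps)
  qed
  show ?thesis
    unfolding R_def[symmetric]
  proof (intro exI[of _ xx] exI[of _ zz] allI conjI)
    fix n
    show "zz n \<in> K" "norm (G (xx n) - zz n) \<le> (1/2)^n * R"
      using invariant[of n] by (simp_all add: inv_def)
    show "norm (xx n - x\<^sub>0) \<le> 2 * M * R"
      using invariant[of n] shrink(1)[of n] unfolding inv_def by linarith
    show "norm (xx (Suc n) - xx n) \<le> M * R * (1/2)^n" "norm (zz (Suc n) - zz n) \<le> C * R * (1/2)^n"
      by (rule increments)+
  qed
qed

lemma lyusternik_iteration:
  fixes G :: "'a::banach \<Rightarrow> 'b::banach"
  assumes G_cont: "\<And>x. isCont G x" and "closed K" and "M \<ge> 0" "C \<ge> 0" and z\<^sub>0: "z\<^sub>0 \<in> K"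
    and step: "\<And>x z. z \<in> K \<Longrightarrow> norm (x - x\<^sub>0) \<le> 2 * M * norm (G x\<^sub>0 - z\<^sub>0) \<Longrightarrow>
        norm (z - z\<^sub>0) \<le> 2 * C * norm (G x\<^sub>0 - z\<^sub>0) \<Longrightarrow> norm (G x - z) \<le> norm (G x\<^sub>0 - z\<^sub>0) \<Longrightarrow>
        \<exists>x' z'. z' \<in> K \<and> norm (G x' - z') \<le> norm (G x - z) / 2 \<and>
          norm (x' - x) \<le> M * norm (G x - z) \<and> norm (z' - z) \<le> C * norm (G x - z)"
  shows "\<exists>x. G x \<in> K \<and> norm (x - x\<^sub>0) \<le> 2 * M * norm (G x\<^sub>0 - z\<^sub>0)"
proof -
  define R where "R = norm (G x\<^sub>0 - z\<^sub>0)"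
  obtain xx zz where seq: "\<And>n. zz n \<in> K" "\<And>n. norm (G (xx n) - zz n) \<le> (1/2)^n * R"
    "\<And>n. norm (xx n - x\<^sub>0) \<le> 2 * M * R"
    and increments: "\<And>n. norm (xx (Suc n) - xx n) \<le> (M * R) * (1/2)^n"
    "\<And>n. norm (zz (Suc n) - zz n) \<le> (C * R) * (1/2)^n"
    using lyusternik_sequence[where G=G and x\<^sub>0=x\<^sub>0, OF assms(3-5) step] unfolding R_def[symmetric] by blast
  obtain x where x: "xx \<longlonglongrightarrow> x"
    using convergent_if_geometric_increments[OF increments(1)] unfolding convergent_def by blast
  obtain z where z: "zz \<longlonglongrightarrow> z"
    using convergent_if_geometric_increments[OF increments(2)] unfolding convergent_def by blast
  have "(\<lambda>n. G (xx n) - zz n) \<longlonglongrightarrow> G x - z"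
    using isCont_tendsto_compose[OF G_cont x] z by (rule tendsto_diff)
  moreover have "(\<lambda>n. G (xx n) - zz n) \<longlonglongrightarrow> 0"
  proof (rule Lim_null_comparison)
    show "\<forall>\<^sub>F n in sequentially. norm (G (xx n) - zz n) \<le> (1/2)^n * R"
      using seq(2) by simp
    show "(\<lambda>n. (1/2::real)^n * R) \<longlonglongrightarrow> 0"
      by (intro tendsto_mult_left_zero LIMSEQ_power_zero) simp
  qed
  ultimately have "G x = z" using LIMSEQ_unique by fastforce
  moreover have "z \<in> K" using closed_sequentially[OF \<open>closed K\<close> _ z] seq(1) by simp
  moreover have "norm (x - x\<^sub>0) \<le> 2 * M * R"
  proof (rule Lim_norm_ubound[of sequentially "\<lambda>n. xx n - x\<^sub>0"])
    show "(\<lambda>n. xx n - x\<^sub>0) \<longlonglongrightarrow> x - x\<^sub>0" using x by (intro tendsto_diff tendsto_const)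
    show "\<forall>\<^sub>F n in sequentially. norm (xx n - x\<^sub>0) \<le> 2 * M * R" using seq(3) by simp
  qed simp
  ultimately show ?thesis unfolding R_def by blast
qed

text \<open>The term \<open>- s y0\<close> left over by the linearised equation is absorbed into \<open>K\<close>: for \<open>s \<le> 0\<close>
  it lies in \<open>K\<close>, and for \<open>s > 0\<close> it is traded for \<open>(1 - s) z \<in> K\<close>, at the price of an error
  \<open>s (z - y0)\<close> that is small because \<open>z\<close> is close to \<open>y0\<close>.\<close>
lemma robinson_correction_step:
  fixes G :: "'a::real_normed_vector \<Rightarrow> 'b::real_normed_vector"
  assumes "convex K" "cone K" "y0 \<in> K"
    and G_diff: "\<And>x. (G has_derivative blinfun_apply (DG x)) (at x)"
    and M: "M > 0"
    and DG_near: "\<And>x. x \<in> ball xs \<rho> \<Longrightarrow> norm (DG x - DG xs) \<le> 1 / (4 * M)"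
    and rep: "- (G x - z) = blinfun_apply (DG xs) e - k + s *\<^sub>R y0" "k \<in> K"
      "norm e \<le> M * norm (G x - z)" "\<bar>s\<bar> \<le> M * norm (G x - z)" "\<bar>s\<bar> \<le> 1"
    and x: "x \<in> ball xs \<rho>" "x + e \<in> ball xs \<rho>"
    and z: "z \<in> K" "norm (z - y0) \<le> min 1 (1 / (4 * M))"
  shows "\<exists>z'\<in>K. norm (G (x + e) - z') \<le> norm (G x - z) / 2 \<and>
    norm (z' - z) \<le> (norm (DG xs) * M + M * norm y0 + 1 + M * (norm y0 + 1)) * norm (G x - z)"
proof -
  define r where "r = G x - z"
  define w where "w = (if s > 0 then z else y0)"
  define z' where "z' = z + k - s *\<^sub>R w"
  have k: "k = blinfun_apply (DG xs) e + s *\<^sub>R y0 + r" using rep(1) by (simp add: r_def algebra_simps)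
  have "z' \<in> K"
  proof (cases "s > 0")
    case True
    then have "(1 - s) *\<^sub>R z \<in> K" using \<open>cone K\<close> z(1) rep(5) by (simp add: mem_cone)
    then have "(1 - s) *\<^sub>R z + k \<in> K" using convex_cone_add_mem[OF assms(1,2) _ rep(2)] by blast
    then show ?thesis using True by (simp add: z'_def w_def algebra_simps)
  next
    case False
    then have "(- s) *\<^sub>R y0 \<in> K" by (intro mem_cone[OF \<open>cone K\<close> \<open>y0 \<in> K\<close>]) simp
    then have "z + k + (- s) *\<^sub>R y0 \<in> K" using convex_cone_add_mem[OF assms(1,2)] z(1) rep(2) by blast
    then show ?thesis using False by (simp add: z'_def w_def algebra_simps)
  qed
  have w: "norm (w - y0) \<le> 1 / (4 * M)" "norm w \<le> norm y0 + 1"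
    using z(2) norm_triangle_ineq[of y0 "z - y0"] M by (auto simp: w_def)
  have "norm (G (x + e) - G x - blinfun_apply (DG xs) e) \<le> norm e * (1 / (4 * M))"
    by (rule linearization_error_bound[OF G_diff DG_near x])
  also have "\<dots> \<le> norm r / 4" using rep(3) M by (simp add: r_def field_simps)
  finally have lin: "norm (G (x + e) - G x - blinfun_apply (DG xs) e) \<le> norm r / 4" .
  have "norm (s *\<^sub>R (w - y0)) \<le> \<bar>s\<bar> * (1 / (4 * M))"
    using mult_left_mono[OF w(1) abs_ge_zero[of s]] by simp
  also have "\<dots> \<le> norm r / 4" using rep(4) M by (simp add: r_def field_simps)
  finally have shift: "norm (s *\<^sub>R (w - y0)) \<le> norm r / 4" .
  have "G (x + e) - z' = (G (x + e) - G x - blinfun_apply (DG xs) e) + s *\<^sub>R (w - y0)"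
    by (simp add: z'_def k r_def algebra_simps)
  then have "norm (G (x + e) - z')
      \<le> norm (G (x + e) - G x - blinfun_apply (DG xs) e) + norm (s *\<^sub>R (w - y0))"
    by (simp only: norm_triangle_ineq)
  with lin shift have "norm (G (x + e) - z') \<le> norm r / 2" by linarith
  moreover have "norm (z' - z) \<le> (norm (DG xs) * M + M * norm y0 + 1 + M * (norm y0 + 1)) * norm r"
  proof -
    have "norm k \<le> norm (DG xs) * norm e + \<bar>s\<bar> * norm y0 + norm r"
      using norm_triangle_ineq[of "blinfun_apply (DG xs) e + s *\<^sub>R y0" r]
        norm_triangle_ineq[of "blinfun_apply (DG xs) e" "s *\<^sub>R y0"] norm_blinfun[of "DG xs" e]
      unfolding k by simp
    moreover have "\<bar>s\<bar> * norm w \<le> \<bar>s\<bar> * (norm y0 + 1)" using w(2) by (simp add: mult_left_mono)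
    moreover have "norm (DG xs) * norm e \<le> norm (DG xs) * (M * norm r)" "\<bar>s\<bar> * norm y0 \<le> M * norm r * norm y0"
      "\<bar>s\<bar> * (norm y0 + 1) \<le> M * norm r * (norm y0 + 1)"
      using rep(3,4) by (simp_all add: r_def mult_left_mono mult_right_mono)
    moreover have "norm (z' - z) \<le> norm k + \<bar>s\<bar> * norm w"
      using norm_triangle_ineq4[of k "s *\<^sub>R w"] by (simp add: z'_def)
    ultimately show ?thesis by (simp add: algebra_simps)
  qed
  ultimately show ?thesis using \<open>z' \<in> K\<close> unfolding r_def by blast
qed

lemma metric_regularity:
  fixes G :: "'a::banach \<Rightarrow> 'b::banach"
  assumes "closed K" "convex K" "cone K" "G xs \<in> K"
    and G_diff: "\<And>x. (G has_derivative blinfun_apply (DG x)) (at x)"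
    and DG_cont: "isCont DG xs"
    and M: "M > 0"
    and opn: "\<forall>y. \<exists>e k s. y = blinfun_apply (DG xs) e - k + s *\<^sub>R G xs \<and> k \<in> K \<and>
        norm e \<le> M * norm y \<and> \<bar>s\<bar> \<le> M * norm y"
  shows "\<exists>\<rho>>0. \<forall>x z. norm (x - xs) < \<rho> \<longrightarrow> z \<in> K \<longrightarrow> norm (z - G xs) < \<rho> \<longrightarrow> norm (G x - z) < \<rho> \<longrightarrow>
            (\<exists>x'. G x' \<in> K \<and> norm (x' - x) \<le> 2 * M * norm (G x - z))"
proof -
  define y0 where "y0 = G xs"
  obtain \<rho>1 where \<rho>1: "\<rho>1 > 0" "\<And>x. x \<in> ball xs \<rho>1 \<Longrightarrow> norm (DG x - DG xs) \<le> 1 / (4 * M)"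
  proof -
    have "1 / (4 * M) > 0" using M by simp
    then obtain d where "d > 0" "\<And>x. dist x xs < d \<Longrightarrow> dist (DG x) (DG xs) < 1 / (4 * M)"
      using DG_cont unfolding continuous_at_eps_delta by blast
    then show ?thesis by (intro that[of d]) (auto simp: dist_commute dist_norm less_imp_le)
  qed
  define \<beta> where "\<beta> = min 1 (1 / (4 * M))"
  define C where "C = norm (DG xs) * M + M * norm y0 + 1 + M * (norm y0 + 1)"
  have C: "C \<ge> 0" using M by (simp add: C_def)
  define \<rho> where "\<rho> = min (\<rho>1 / (1 + 3 * M)) (min (\<beta> / (1 + 2 * C)) (1 / M))"
  have \<rho>: "\<rho> > 0" using \<rho>1 M C by (simp add: \<rho>_def \<beta>_def)
  have "\<rho> \<le> \<rho>1 / (1 + 3 * M)" "\<rho> \<le> \<beta> / (1 + 2 * C)" "\<rho> \<le> 1 / M" by (simp_all add: \<rho>_def)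
  then have \<rho>_bounds: "\<rho> * (1 + 3 * M) \<le> \<rho>1" "\<rho> * (1 + 2 * C) \<le> \<beta>" "M * \<rho> \<le> 1"
    using M C by (simp_all add: pos_le_divide_eq mult.commute[of M])
  have "\<exists>x'. G x' \<in> K \<and> norm (x' - x0) \<le> 2 * M * norm (G x0 - z0)"
    if x0: "norm (x0 - xs) < \<rho>" and z0: "z0 \<in> K" "norm (z0 - y0) < \<rho>" and r0: "norm (G x0 - z0) < \<rho>"
    for x0 z0
  proof (rule lyusternik_iteration[OF _ \<open>closed K\<close> _ C z0(1)])
    show "isCont G x" for x using G_diff by (rule has_derivative_continuous)
    show "M \<ge> 0" using M by simp
    fix x z assume z: "z \<in> K" and x_near: "norm (x - x0) \<le> 2 * M * norm (G x0 - z0)"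
      and z_near: "norm (z - z0) \<le> 2 * C * norm (G x0 - z0)" and r: "norm (G x - z) \<le> norm (G x0 - z0)"
    obtain e k s where eks: "- (G x - z) = blinfun_apply (DG xs) e - k + s *\<^sub>R y0" "k \<in> K"
      "norm e \<le> M * norm (G x - z)" "\<bar>s\<bar> \<le> M * norm (G x - z)"
      using opn unfolding y0_def by (metis norm_minus_cancel)
    define R where "R = norm (G x0 - z0)"
    have MR: "M * norm (G x - z) \<le> M * \<rho>" "M * R \<le> M * \<rho>" "C * R \<le> C * \<rho>" "0 \<le> M * \<rho>"
      using r r0 M C \<rho> by (simp_all add: R_def mult_left_mono)
    have near: "norm (x - x0) \<le> 2 * (M * R)" "norm (z - z0) \<le> 2 * (C * R)"
      using x_near z_near by (simp_all add: R_def mult.assoc)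
    have "\<rho> * (1 + 3 * M) = \<rho> + 3 * (M * \<rho>)" "\<rho> * (1 + 2 * C) = \<rho> + 2 * (C * \<rho>)"
      by (simp_all add: algebra_simps)
    with \<rho>_bounds have bounds: "\<rho> + 3 * (M * \<rho>) \<le> \<rho>1" "\<rho> + 2 * (C * \<rho>) \<le> \<beta>" by simp_all
    have "norm (x - xs) \<le> norm (x - x0) + norm (x0 - xs)"
      using norm_triangle_ineq[of "x - x0" "x0 - xs"] by simp
    then have "norm (xs - x) < \<rho>1"
      using x0 near(1) MR bounds(1) by (simp add: norm_minus_commute)
    moreover have "norm (x + e - xs) \<le> norm (x - x0) + norm e + norm (x0 - xs)"
      using norm_triangle_ineq[of "x - x0 + e" "x0 - xs"] norm_triangle_ineq[of "x - x0" e] by simp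
    then have "norm (xs - (x + e)) < \<rho>1"
      using x0 near(1) eks(3) MR bounds(1) by (simp add: norm_minus_commute)
    ultimately have x_ball: "x \<in> ball xs \<rho>1" "x + e \<in> ball xs \<rho>1" by (simp_all add: dist_norm)
    have "norm (z - y0) \<le> \<beta>"
      using norm_triangle_ineq[of "z - z0" "z0 - y0"] z_near z0(2) near(2) MR bounds(2) by simp
    then have z_y0: "norm (z - y0) \<le> min 1 (1 / (4 * M))" by (simp add: \<beta>_def)
    have "\<bar>s\<bar> \<le> 1" using eks(4) MR \<rho>_bounds(3) by linarith
    then obtain z' where "z' \<in> K" "norm (G (x + e) - z') \<le> norm (G x - z) / 2"
      "norm (z' - z) \<le> C * norm (G x - z)"
      using robinson_correction_step[OF \<open>convex K\<close> \<open>cone K\<close> \<open>G xs \<in> K\<close>[folded y0_def] G_diff M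
        \<rho>1(2) eks _ x_ball z z_y0] unfolding C_def by blast
    with eks(3) show "\<exists>x' z'. z' \<in> K \<and> norm (G x' - z') \<le> norm (G x - z) / 2 \<and>
        norm (x' - x) \<le> M * norm (G x - z) \<and> norm (z' - z) \<le> C * norm (G x - z)"
      by (intro exI[of _ "x + e"] exI[of _ z']) simp
  qed
  with \<rho> show ?thesis unfolding y0_def by blast
qed

section \<open>Second-order Taylor expansions\<close>

lemma taylor_second_order:
  fixes \<phi> :: "'a::real_normed_vector \<Rightarrow> 'c::real_normed_vector" and D :: "'a \<Rightarrow> 'a \<Rightarrow> 'c" and B :: "'a \<Rightarrow> 'a \<Rightarrow> 'c"
  assumes r: "r > 0" and D: "\<And>x. x \<in> ball xs r \<Longrightarrow> (\<phi> has_derivative D x) (at x)"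
    and Bh: "\<And>s u v. B (s *\<^sub>R u) v = s *\<^sub>R B u v"
    and Dlim: "\<And>\<epsilon>. \<epsilon> > 0 \<Longrightarrow> \<exists>\<delta>>0. \<forall>u v. norm u < \<delta> \<longrightarrow> norm (D (xs + u) v - D xs v - B u v) \<le> \<epsilon> * norm u * norm v"
    and eps: "\<epsilon> > 0"
  shows "\<exists>\<delta>>0. \<forall>v. norm v < \<delta> \<longrightarrow> norm (\<phi> (xs + v) - \<phi> xs - D xs v - (1/2) *\<^sub>R B v v) \<le> \<epsilon> * (norm v)^2"
proof -
  obtain \<delta>0 where \<delta>0: "\<delta>0 > 0" "\<And>u v. norm u < \<delta>0 \<Longrightarrow> norm (D (xs + u) v - D xs v - B u v) \<le> \<epsilon> * norm u * norm v"
    using Dlim[OF eps] by blast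
  define \<delta> where "\<delta> = min \<delta>0 r"
  have \<delta>: "\<delta> > 0" using \<delta>0 r by (simp add: \<delta>_def)
  have "norm (\<phi> (xs + v) - \<phi> xs - D xs v - (1/2) *\<^sub>R B v v) \<le> \<epsilon> * (norm v)^2" if v: "norm v < \<delta>" for v
  proof -
    define \<psi> where "\<psi> s = \<phi> (xs + s *\<^sub>R v) - s *\<^sub>R D xs v - (s^2/2) *\<^sub>R B v v" for s :: real
    define w where "w s = D (xs + s *\<^sub>R v) v - D xs v - s *\<^sub>R B v v" for s :: real
    have inball: "xs + s *\<^sub>R v \<in> ball xs r" if "s \<in> {0..1}" for s
    proof -
      have "norm (s *\<^sub>R v) \<le> norm v" using that by (simp add: mult_left_le_one_le)
      thus ?thesis using v by (simp add: dist_norm \<delta>_def)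
    qed
    have der: "(\<psi> has_vector_derivative w s) (at s within {0..1})" if s: "s \<in> {0..1}" for s
    proof -
      have 1: "((\<lambda>s. xs + s *\<^sub>R v) has_vector_derivative v) (at s within {0..1})"
        by (auto intro!: derivative_eq_intros)
      have 2: "(\<phi> has_derivative D (xs + s *\<^sub>R v)) (at ((\<lambda>s. xs + s *\<^sub>R v) s) within (\<lambda>s. xs + s *\<^sub>R v) ` {0..1})"
        using D[OF inball[OF s]] by (auto intro: has_derivative_at_withinI)
      have 3: "((\<lambda>s. \<phi> (xs + s *\<^sub>R v)) has_vector_derivative D (xs + s *\<^sub>R v) v) (at s within {0..1})"
        using vector_derivative_diff_chain_within[OF 1 2] by (simp add: o_def)
      have 4: "((\<lambda>s. s *\<^sub>R D xs v) has_vector_derivative D xs v) (at s within {0..1})"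
        by (auto intro!: derivative_eq_intros)
      have 5: "((\<lambda>s. (s^2/2) *\<^sub>R B v v) has_vector_derivative s *\<^sub>R B v v) (at s within {0..1})"
        unfolding has_vector_derivative_def
        by (auto intro!: derivative_eq_intros simp: algebra_simps power2_eq_square)
      show ?thesis unfolding \<psi>_def w_def
        by (intro has_vector_derivative_diff 3 4 5)
    qed
    have w0: "w 0 = 0" using Bh[of 0] by (simp add: w_def)
    have wb: "norm (w s - w 0) \<le> \<epsilon> * (norm v)^2" if s: "s \<in> {0..1}" for s
    proof -
      have ns: "norm (s *\<^sub>R v) \<le> norm v" using s by (simp add: mult_left_le_one_le)
      have "w s = D (xs + s *\<^sub>R v) v - D xs v - B (s *\<^sub>R v) v" by (simp add: w_def Bh)
      hence "norm (w s) \<le> \<epsilon> * norm (s *\<^sub>R v) * norm v"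
        using \<delta>0(2)[of "s *\<^sub>R v" v] ns v by (simp add: \<delta>_def)
      also have "\<dots> \<le> \<epsilon> * norm v * norm v" using ns eps by (intro mult_right_mono mult_left_mono) auto
      finally show ?thesis using w0 by (simp add: power2_eq_square mult.assoc)
    qed
    have "norm (\<psi> 1 - \<psi> 0 - (1 - 0) *\<^sub>R w 0) \<le> norm (1 - 0::real) * (\<epsilon> * (norm v)^2)"
    proof (rule vector_differentiable_bound_linearization)
      show "\<And>s. s \<in> {0..1::real} \<Longrightarrow> (\<psi> has_vector_derivative w s) (at s within {0..1})" by (rule der)
      show "closed_segment 0 1 \<subseteq> {0..1::real}" by (simp add: closed_segment_eq_real_ivl)
      show "\<And>s. s \<in> {0..1::real} \<Longrightarrow> norm (w s - w 0) \<le> \<epsilon> * (norm v)^2" by (rule wb)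
      show "(0::real) \<in> {0..1}" by simp
    qed
    thus ?thesis using w0 by (simp add: \<psi>_def algebra_simps)
  qed
  thus ?thesis using \<delta> by blast
qed

lemma little_o_square_along_scaled_sequence:
  fixes Rem :: "'a::real_normed_vector \<Rightarrow> 'c::real_normed_vector"
  assumes small: "\<And>\<epsilon>. \<epsilon> > 0 \<Longrightarrow> \<exists>\<delta>>0. \<forall>v. norm v < \<delta> \<longrightarrow> norm (Rem v) \<le> \<epsilon> * (norm v)^2"
    and T: "\<And>n. T n > 0" "T \<longlonglongrightarrow> 0" and a: "a \<longlonglongrightarrow> 0"
  shows "(\<lambda>n. Rem (T n *\<^sub>R (h + a n)) /\<^sub>R (T n)^2) \<longlonglongrightarrow> 0"
proof -
  define v where "v n = T n *\<^sub>R (h + a n)" for n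
  have "(\<lambda>n. Rem (v n) /\<^sub>R (T n)^2) \<longlonglongrightarrow> 0"
    unfolding tendsto_iff
  proof (intro allI impI)
    fix \<epsilon> :: real assume \<epsilon>: "\<epsilon> > 0"
    define C where "C = (norm h + 1)^2"
    have C: "C > 0" using norm_ge_zero[of h] unfolding C_def by (intro zero_less_power) linarith
    then have \<epsilon>C: "\<epsilon> / (2 * C) > 0" using \<epsilon> by simp
    then obtain \<delta> where \<delta>: "\<delta> > 0" "\<And>v. norm v < \<delta> \<Longrightarrow> norm (Rem v) \<le> (\<epsilon> / (2 * C)) * (norm v)^2"
      using small[OF \<epsilon>C] by blast
    have "v \<longlonglongrightarrow> 0 *\<^sub>R (h + 0)" unfolding v_def by (intro tendsto_intros T a)
    then have "(\<lambda>n. norm (v n)) \<longlonglongrightarrow> 0" unfolding scale_zero_left by (rule tendsto_norm_zero)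
    then have ev1: "\<forall>\<^sub>F n in sequentially. norm (v n) < \<delta>"
      using \<delta>(1) by (rule order_tendstoD(2))
    have "(\<lambda>n. norm (a n)) \<longlonglongrightarrow> 0" using a by (rule tendsto_norm_zero)
    then have ev2: "\<forall>\<^sub>F n in sequentially. norm (a n) < 1" by (rule order_tendstoD(2)) simp
    show "\<forall>\<^sub>F n in sequentially. dist (Rem (v n) /\<^sub>R (T n)^2) 0 < \<epsilon>"
      using ev1 ev2
    proof eventually_elim
      case (elim n)
      have Tn: "T n > 0" by (rule T(1))
      have "norm (h + a n) \<le> norm h + 1" using elim(2) norm_triangle_ineq[of h "a n"] by linarith
      moreover have "norm (v n) = T n * norm (h + a n)" using Tn by (simp add: v_def)
      ultimately have "norm (v n) \<le> T n * (norm h + 1)"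
        using mult_left_mono[of "norm (h + a n)" "norm h + 1" "T n"] Tn by linarith
      from power_mono[OF this norm_ge_zero, of 2]
      have nv2: "(norm (v n))^2 \<le> (T n)^2 * C"
        unfolding C_def by (simp only: power_mult_distrib)
      have "norm (Rem (v n)) \<le> (\<epsilon> / (2 * C)) * (norm (v n))^2"
        using \<delta>(2)[OF elim(1)] .
      also have "\<dots> \<le> (\<epsilon> / (2 * C)) * ((T n)^2 * C)"
        using nv2 \<epsilon>C by (intro mult_left_mono) simp_all
      also have "\<dots> = (T n)^2 * (\<epsilon> / 2)" using C by (simp add: field_simps)
      finally have "norm (Rem (v n)) \<le> (\<epsilon> / 2) * (T n)^2" by (simp only: mult.commute)
      then have "norm (Rem (v n)) / (T n)^2 \<le> \<epsilon> / 2"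
        using Tn by (simp add: pos_divide_le_eq)
      moreover have "dist (Rem (v n) /\<^sub>R (T n)^2) 0 = norm (Rem (v n)) / (T n)^2"
        by (simp add: divide_inverse_commute)
      ultimately show ?case using \<epsilon> by linarith
    qed
  qed
  then show ?thesis by (simp only: v_def)
qed

lemma taylor_second_order_along_parabola:
  fixes \<phi> :: "'a::real_normed_vector \<Rightarrow> 'c::real_normed_vector"
  assumes D0: "bounded_linear D0" and B: "bounded_bilinear B"
    and tay: "\<And>\<epsilon>. \<epsilon> > 0 \<Longrightarrow> \<exists>\<delta>>0. \<forall>v. norm v < \<delta> \<longrightarrow> norm (\<phi> (xs + v) - \<phi> xs - D0 v - (1/2) *\<^sub>R B v v) \<le> \<epsilon> * (norm v)^2"
    and T: "\<And>n. T n > 0" "T \<longlonglongrightarrow> 0" and e: "(\<lambda>n. e n /\<^sub>R (T n)^2) \<longlonglongrightarrow> 0"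
  shows "(\<lambda>n. (\<phi> (xs + (T n *\<^sub>R h + ((T n)^2/2) *\<^sub>R d + e n)) - \<phi> xs - T n *\<^sub>R D0 h
            - ((T n)^2/2) *\<^sub>R (D0 d + B h h)) /\<^sub>R (T n)^2) \<longlonglongrightarrow> 0"
proof -
  interpret D0: bounded_linear D0 by (rule D0)
  interpret B: bounded_bilinear B by (rule B)
  define a where "a n = (T n / 2) *\<^sub>R d + T n *\<^sub>R (e n /\<^sub>R (T n)^2)" for n
  define v where "v n = T n *\<^sub>R h + ((T n)^2/2) *\<^sub>R d + e n" for n
  define R where "R n = \<phi> (xs + v n) - \<phi> xs - D0 (v n) - (1/2) *\<^sub>R B (v n) (v n)" for n
  have a0: "a \<longlonglongrightarrow> 0"
  proof -
    have "(\<lambda>n. (T n / 2) *\<^sub>R d + T n *\<^sub>R (e n /\<^sub>R (T n)^2)) \<longlonglongrightarrow> (0 / 2) *\<^sub>R d + 0 *\<^sub>R 0"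
      by (intro tendsto_intros T e) simp
    thus ?thesis unfolding a_def[abs_def] by simp
  qed
  have vrep: "v n = T n *\<^sub>R (h + a n)" for n
  proof -
    have "T n \<noteq> 0" using T(1)[of n] by simp
    thus ?thesis by (simp add: v_def a_def algebra_simps power2_eq_square field_simps)
  qed
  have iden: "(\<phi> (xs + (T n *\<^sub>R h + ((T n)^2/2) *\<^sub>R d + e n)) - \<phi> xs - T n *\<^sub>R D0 h
            - ((T n)^2/2) *\<^sub>R (D0 d + B h h)) /\<^sub>R (T n)^2
     = R n /\<^sub>R (T n)^2 + D0 (e n /\<^sub>R (T n)^2) + (1/2) *\<^sub>R (B (a n) (h + a n) + B h (a n))" for n
  proof -
    have Tn: "T n \<noteq> 0" using T(1)[of n] by simp
    have 1: "D0 (v n) = T n *\<^sub>R D0 h + ((T n)^2/2) *\<^sub>R D0 d + D0 (e n)"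
      by (simp add: v_def D0.add D0.scaleR)
    have 2: "B (v n) (v n) = (T n)^2 *\<^sub>R (B h h + B (a n) (h + a n) + B h (a n))"
      unfolding vrep by (simp add: B.scaleR_left B.scaleR_right B.add_left B.add_right algebra_simps power2_eq_square)
    have "\<phi> (xs + (T n *\<^sub>R h + ((T n)^2/2) *\<^sub>R d + e n)) - \<phi> xs - T n *\<^sub>R D0 h - ((T n)^2/2) *\<^sub>R (D0 d + B h h)
       = R n + D0 (e n) + ((T n)^2/2) *\<^sub>R (B (a n) (h + a n) + B h (a n))"
      unfolding R_def 1 2 by (simp add: v_def algebra_simps)
    also have "\<dots> /\<^sub>R (T n)^2 = R n /\<^sub>R (T n)^2 + D0 (e n /\<^sub>R (T n)^2) + (1/2) *\<^sub>R (B (a n) (h + a n) + B h (a n))"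
      using Tn by (simp add: D0.scaleR scaleR_add_right)
    finally show ?thesis .
  qed
  have "(\<lambda>n. R n /\<^sub>R (T n)^2) \<longlonglongrightarrow> 0"
    unfolding R_def vrep by (rule little_o_square_along_scaled_sequence[OF tay T a0])
  then have "(\<lambda>n. R n /\<^sub>R (T n)^2 + D0 (e n /\<^sub>R (T n)^2) + (1/2) *\<^sub>R (B (a n) (h + a n) + B h (a n)))
      \<longlonglongrightarrow> 0 + D0 0 + (1/2) *\<^sub>R (B 0 (h + 0) + B h 0)"
    by (intro tendsto_intros e a0 D0.tendsto B.tendsto)
  thus ?thesis unfolding iden by (simp add: D0.zero B.zero_left B.zero_right)
qed

section \<open>Maxima of finitely many affine functions\<close>

lemma convex_hull_finite_image_weights:
  fixes p :: "'i \<Rightarrow> 'a::real_vector"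
  assumes "finite I"
  shows "convex hull (p ` I) = {\<Sum>i\<in>I. \<alpha> i *\<^sub>R p i | \<alpha>. (\<forall>i\<in>I. 0 \<le> \<alpha> i) \<and> sum \<alpha> I = 1}"
    (is "_ = ?P")
proof
  have "convex ?P"
    unfolding convex_def
  proof (intro ballI allI impI)
    fix x y and a b :: real assume "x \<in> ?P" "y \<in> ?P" and ab: "0 \<le> a" "0 \<le> b" "a + b = 1"
    then obtain \<alpha> \<beta> where \<alpha>: "\<forall>i\<in>I. 0 \<le> \<alpha> i" "sum \<alpha> I = 1" "x = (\<Sum>i\<in>I. \<alpha> i *\<^sub>R p i)"
      and \<beta>: "\<forall>i\<in>I. 0 \<le> \<beta> i" "sum \<beta> I = 1" "y = (\<Sum>i\<in>I. \<beta> i *\<^sub>R p i)"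
      by blast
    have comb: "a *\<^sub>R x + b *\<^sub>R y = (\<Sum>i\<in>I. (a * \<alpha> i + b * \<beta> i) *\<^sub>R p i)"
      unfolding \<alpha>(3) \<beta>(3) by (simp add: scaleR_sum_right sum.distrib scaleR_add_left)
    have nonneg: "\<forall>i\<in>I. 0 \<le> a * \<alpha> i + b * \<beta> i" using \<alpha>(1) \<beta>(1) ab by simp
    have sum1: "(\<Sum>i\<in>I. a * \<alpha> i + b * \<beta> i) = 1"
      using \<alpha>(2) \<beta>(2) ab by (simp add: sum.distrib sum_distrib_left[symmetric])
    show "a *\<^sub>R x + b *\<^sub>R y \<in> ?P"
      by (intro CollectI exI[of _ "\<lambda>i. a * \<alpha> i + b * \<beta> i"]) (simp add: comb nonneg sum1)
  qed
  moreover have "p ` I \<subseteq> ?P"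
  proof
    fix z assume "z \<in> p ` I"
    then obtain j where j: "j \<in> I" "z = p j" by blast
    have "(\<Sum>i\<in>I. (if i = j then 1 else 0) *\<^sub>R p i) = p j"
      using assms j(1) by (simp add: if_distrib[of "\<lambda>c. c *\<^sub>R _"] sum.delta cong: if_cong)
    moreover have "(\<Sum>i\<in>I. if i = j then 1 else 0 :: real) = 1" using assms j(1) by simp
    ultimately show "z \<in> ?P" using j(2)
      by (intro CollectI exI[of _ "\<lambda>i. if i = j then 1 else 0"]) auto
  qed
  ultimately show "convex hull (p ` I) \<subseteq> ?P" by (rule hull_minimal[rotated])
next
  show "?P \<subseteq> convex hull (p ` I)"
  proof
    fix z assume "z \<in> ?P"
    then obtain \<alpha> where \<alpha>: "\<forall>i\<in>I. 0 \<le> \<alpha> i" "sum \<alpha> I = 1" "z = (\<Sum>i\<in>I. \<alpha> i *\<^sub>R p i)" by blast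
    show "z \<in> convex hull (p ` I)"
      unfolding \<alpha>(3) using assms \<alpha>(1,2)
      by (intro convex_sum convex_convex_hull) (auto intro: hull_inc)
  qed
qed

definition max_affine :: "'i set \<Rightarrow> ('i \<Rightarrow> 'a::real_inner) \<Rightarrow> ('i \<Rightarrow> real) \<Rightarrow> 'a \<Rightarrow> real \<Rightarrow> real" where
  "max_affine I g q d t = Max ((\<lambda>i. g i \<bullet> d + t * q i) ` I)"

lemma max_affine_ge: "finite I \<Longrightarrow> i \<in> I \<Longrightarrow> g i \<bullet> d + t * q i \<le> max_affine I g q d t"
  unfolding max_affine_def by (intro Max_ge) auto

lemma max_affine_attained:
  assumes "finite I" "I \<noteq> {}"
  shows "\<exists>i\<in>I. max_affine I g q d t = g i \<bullet> d + t * q i"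
proof -
  have "max_affine I g q d t \<in> (\<lambda>i. g i \<bullet> d + t * q i) ` I"
    unfolding max_affine_def using assms by (intro Max_in) auto
  then show ?thesis by auto
qed

lemma max_affine_le:
  "finite I \<Longrightarrow> I \<noteq> {} \<Longrightarrow> (\<And>i. i \<in> I \<Longrightarrow> g i \<bullet> d + t * q i \<le> c) \<Longrightarrow> max_affine I g q d t \<le> c"
  using max_affine_attained by metis

lemma dominated_by_max_affine_imp_convex_combination:
  fixes g :: "'i \<Rightarrow> 'a::euclidean_space" and q :: "'i \<Rightarrow> real"
  assumes I: "finite I" "I \<noteq> {}"
    and dominated: "\<And>d t. t \<ge> 0 \<Longrightarrow> u \<bullet> d + t * \<tau> \<le> max_affine I g q d t"
  shows "\<exists>\<alpha>. (\<forall>i\<in>I. \<alpha> i \<ge> 0) \<and> sum \<alpha> I = 1 \<and> (\<Sum>i\<in>I. \<alpha> i *\<^sub>R g i) = u \<and> \<tau> \<le> (\<Sum>i\<in>I. \<alpha> i * q i)"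
proof -
  define P where "P = convex hull ((\<lambda>i. (g i, q i)) ` I)"
  define N where "N = {0::'a} \<times> {..0::real}"
  define S where "S = (\<Union>x\<in>N. \<Union>y\<in>P. {x + y})"
  have "compact P" unfolding P_def using I by (simp add: finite_imp_compact_convex_hull)
  moreover have "closed N" "convex N" unfolding N_def by (auto intro: closed_Times convex_Times)
  ultimately have S: "closed S" "convex S"
    unfolding S_def by (auto intro: closed_compact_sums convex_sums simp: P_def)
  have "(u, \<tau>) \<in> S"
  proof (rule ccontr)
    assume "(u, \<tau>) \<notin> S"
    then obtain a b where ab: "a \<bullet> (u, \<tau>) < b" "\<And>x. x \<in> S \<Longrightarrow> b < a \<bullet> x"
      using separating_hyperplane_closed_point[OF S(2,1)] by blast
    obtain d t where a: "a = (- d, - t)" by (metis minus_minus surj_pair)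
    have below: "b < - (g i \<bullet> d) - t * q i + t * r" if "r \<ge> 0" "i \<in> I" for r i
    proof -
      have "(g i, q i) \<in> P" unfolding P_def using that(2) by (simp add: hull_inc)
      moreover have "(0, - r) \<in> N" using that(1) by (simp add: N_def)
      ultimately have "(0, - r) + (g i, q i) \<in> S" unfolding S_def by blast
      from ab(2)[OF this] show ?thesis by (simp add: a inner_commute algebra_simps)
    qed
    have "t \<ge> 0"
    proof (rule ccontr)
      assume "\<not> t \<ge> 0"
      obtain i where "i \<in> I" using I by blast
      define r where "r = (g i \<bullet> d + t * q i + b) / t"
      have "r \<ge> 0" using below[OF _ \<open>i \<in> I\<close>, of 0] \<open>\<not> t \<ge> 0\<close> by (simp add: r_def divide_nonpos_neg)
      with below[OF this \<open>i \<in> I\<close>] \<open>\<not> t \<ge> 0\<close> show False by (simp add: r_def)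
    qed
    obtain i where i: "i \<in> I" "max_affine I g q d t = g i \<bullet> d + t * q i"
      using max_affine_attained[OF I] by blast
    have "max_affine I g q d t < - b" using below[OF _ i(1), of 0] i(2) by simp
    moreover have "- b < u \<bullet> d + t * \<tau>" using ab(1) by (simp add: a inner_commute algebra_simps)
    ultimately show False using dominated[OF \<open>t \<ge> 0\<close>, of d] by linarith
  qed
  then obtain r y where r: "r \<le> 0" and "y \<in> P" and uy: "(u, \<tau>) = (0, r) + y"
    unfolding S_def N_def by blast
  from \<open>y \<in> P\<close> obtain \<alpha> where \<alpha>: "\<forall>i\<in>I. 0 \<le> \<alpha> i" "sum \<alpha> I = 1"
    and y: "y = (\<Sum>i\<in>I. \<alpha> i *\<^sub>R (g i, q i))"
    unfolding P_def convex_hull_finite_image_weights[OF I(1)] by blast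
  from uy have "u = (\<Sum>i\<in>I. \<alpha> i *\<^sub>R g i)" "\<tau> = r + (\<Sum>i\<in>I. \<alpha> i * q i)"
    unfolding y by (simp_all add: prod_eq_iff fst_sum snd_sum)
  with \<alpha> r show ?thesis by (intro exI[of _ \<alpha>]) auto
qed

lemma max_affine_add_le:
  assumes "finite I" "I \<noteq> {}"
  shows "max_affine I g q (d1 + d2) (t1 + t2) \<le> max_affine I g q d1 t1 + max_affine I g q d2 t2"
proof (rule max_affine_le[OF assms])
  fix i assume i: "i \<in> I"
  have "g i \<bullet> (d1 + d2) + (t1 + t2) * q i = (g i \<bullet> d1 + t1 * q i) + (g i \<bullet> d2 + t2 * q i)"
    by (simp add: inner_add_right algebra_simps)
  also have "\<dots> \<le> max_affine I g q d1 t1 + max_affine I g q d2 t2"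
    by (intro add_mono max_affine_ge[OF assms(1) i])
  finally show "g i \<bullet> (d1 + d2) + (t1 + t2) * q i \<le> \<dots>" .
qed

lemma max_affine_scale:
  assumes "finite I" "I \<noteq> {}" "c > 0"
  shows "max_affine I g q (c *\<^sub>R d) (c * t) = c * max_affine I g q d t"
proof (rule antisym)
  show "max_affine I g q (c *\<^sub>R d) (c * t) \<le> c * max_affine I g q d t"
  proof (rule max_affine_le[OF assms(1,2)])
    fix i assume "i \<in> I"
    have "g i \<bullet> (c *\<^sub>R d) + c * t * q i = c * (g i \<bullet> d + t * q i)" by (simp add: algebra_simps)
    also have "\<dots> \<le> c * max_affine I g q d t"
      using max_affine_ge[OF assms(1) \<open>i \<in> I\<close>] \<open>c > 0\<close> by (intro mult_left_mono) auto
    finally show "g i \<bullet> (c *\<^sub>R d) + c * t * q i \<le> c * max_affine I g q d t" .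
  qed
  obtain i where i: "i \<in> I" "max_affine I g q d t = g i \<bullet> d + t * q i"
    using max_affine_attained[OF assms(1,2)] by blast
  have "c * max_affine I g q d t = g i \<bullet> (c *\<^sub>R d) + c * t * q i" using i(2) by (simp add: algebra_simps)
  also have "\<dots> \<le> max_affine I g q (c *\<^sub>R d) (c * t)" by (rule max_affine_ge[OF assms(1) i(1)])
  finally show "c * max_affine I g q d t \<le> max_affine I g q (c *\<^sub>R d) (c * t)" .
qed

lemma max_affine_zero: "finite I \<Longrightarrow> I \<noteq> {} \<Longrightarrow> max_affine I g q 0 0 = 0"
  using max_affine_attained[of I g q 0 0] by auto

lemma max_affine_le_norm:
  assumes "finite I" "I \<noteq> {}"
  shows "max_affine I g q d 0 \<le> (\<Sum>i\<in>I. norm (g i)) * norm d"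
proof (rule max_affine_le[OF assms])
  fix i assume "i \<in> I"
  have "g i \<bullet> d \<le> norm (g i) * norm d" by (rule abs_le_D1[OF Cauchy_Schwarz_ineq2])
  also have "\<dots> \<le> (\<Sum>i\<in>I. norm (g i)) * norm d"
    using assms(1) \<open>i \<in> I\<close> by (intro mult_right_mono member_le_sum) auto
  finally show "g i \<bullet> d + 0 * q i \<le> (\<Sum>i\<in>I. norm (g i)) * norm d" by simp
qed

section \<open>Max-functions\<close>

lemma maxfun_ge: "i \<in> {1..m} \<Longrightarrow> f x i \<le> maxfun f m x"
  unfolding maxfun_def by (intro Max_ge) auto

lemma maxfun_attained:
  assumes "m \<ge> 1"
  shows "\<exists>i\<in>{1..m}. maxfun f m x = f x i"
proof -
  have "maxfun f m x \<in> (\<lambda>i. f x i) ` {1..m}" unfolding maxfun_def using assms by (intro Max_in) auto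
  then show ?thesis by auto
qed

lemma active_set_subset: "active_set f m x \<subseteq> {1..m}"
  unfolding active_set_def by auto

lemma finite_active_set: "finite (active_set f m x)"
  by (rule finite_subset[OF active_set_subset]) simp

lemma active_set_nonempty:
  assumes "m \<ge> 1"
  shows "active_set f m x \<noteq> {}"
proof -
  obtain i where "i \<in> {1..m}" "maxfun f m x = f x i" using maxfun_attained[OF assms, of f x] by blast
  then have "i \<in> active_set f m x" unfolding active_set_def by simp
  then show ?thesis by blast
qed

lemma active_set_maxfun: "i \<in> active_set f m x \<Longrightarrow> f x i = maxfun f m x"
  unfolding active_set_def by auto

lemma inactive_less_maxfun: "i \<in> {1..m} \<Longrightarrow> i \<notin> active_set f m x \<Longrightarrow> f x i < maxfun f m x"
  using maxfun_ge[of i m f x] unfolding active_set_def by (simp add: order_less_le)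

lemma tendsto_Max_finite:
  fixes g :: "'i \<Rightarrow> 'x \<Rightarrow> real"
  assumes "finite I" "I \<noteq> {}" "\<And>i. i \<in> I \<Longrightarrow> (g i \<longlongrightarrow> l i) F"
  shows "((\<lambda>x. Max ((\<lambda>i. g i x) ` I)) \<longlongrightarrow> Max (l ` I)) F"
  using assms
proof (induction I rule: finite_ne_induct)
  case (singleton i) then show ?case by simp
next
  case (insert i I)
  then have "((\<lambda>x. max (g i x) (Max ((\<lambda>i. g i x) ` I))) \<longlongrightarrow> max (l i) (Max (l ` I))) F"
    by (intro tendsto_max) auto
  with insert show ?case by simp
qed

lemma eventually_maxfun_eq_Max_active:
  assumes "m \<ge> 1" and lim: "\<And>i. i \<in> {1..m} \<Longrightarrow> ((\<lambda>t. f (\<gamma> t) i) \<longlongrightarrow> f x i) F"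
  shows "\<forall>\<^sub>F t in F. maxfun f m (\<gamma> t) = Max ((\<lambda>i. f (\<gamma> t) i) ` active_set f m x)"
proof -
  let ?act = "active_set f m x"
  let ?M = "\<lambda>t. Max ((\<lambda>i. f (\<gamma> t) i) ` ?act)"
  have act: "finite ?act" "?act \<noteq> {}" "?act \<subseteq> {1..m}"
    using finite_active_set[of f m x] active_set_nonempty[OF \<open>m \<ge> 1\<close>, of f x]
      active_set_subset[of f m x] by auto
  have "(?M \<longlongrightarrow> Max ((\<lambda>i. f x i) ` ?act)) F"
    using act lim by (intro tendsto_Max_finite) auto
  moreover have "(\<lambda>i. f x i) ` ?act = {maxfun f m x}"
    using act(2) active_set_maxfun[of _ f m x] by fastforce
  ultimately have M_lim: "(?M \<longlongrightarrow> maxfun f m x) F" by simp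
  have "\<forall>\<^sub>F t in F. \<forall>i\<in>{1..m} - ?act. f (\<gamma> t) i < ?M t"
  proof (rule eventually_ball_finite)
    show "\<forall>i\<in>{1..m} - ?act. \<forall>\<^sub>F t in F. f (\<gamma> t) i < ?M t"
    proof
      fix i assume i: "i \<in> {1..m} - ?act"
      define c where "c = (f x i + maxfun f m x) / 2"
      have lt: "f x i < maxfun f m x" using i inactive_less_maxfun[of i m f x] by blast
      have "\<forall>\<^sub>F t in F. f (\<gamma> t) i < c"
        using lim[of i] i lt by (intro order_tendstoD(2)) (auto simp: c_def)
      moreover have "\<forall>\<^sub>F t in F. c < ?M t"
        using M_lim lt by (intro order_tendstoD(1)) (auto simp: c_def)
      ultimately show "\<forall>\<^sub>F t in F. f (\<gamma> t) i < ?M t" by eventually_elim simp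
    qed
  qed simp
  then show ?thesis
  proof eventually_elim
    case (elim t)
    have "maxfun f m (\<gamma> t) \<le> ?M t"
      unfolding maxfun_def
    proof (rule Max.boundedI)
      show "(\<lambda>i. f (\<gamma> t) i) ` {1..m} \<noteq> {}" using \<open>m \<ge> 1\<close> by simp
      fix y assume "y \<in> (\<lambda>i. f (\<gamma> t) i) ` {1..m}"
      then obtain i where i: "i \<in> {1..m}" "y = f (\<gamma> t) i" by blast
      show "y \<le> ?M t"
      proof (cases "i \<in> ?act")
        case True with i act(1) show ?thesis by (intro Max_ge) auto
      next
        case False
        with i elim have "f (\<gamma> t) i < ?M t" by blast
        with i show ?thesis by simp
      qed
    qed simp
    moreover have "?M t \<le> maxfun f m (\<gamma> t)"
      using act maxfun_ge[of _ m f "\<gamma> t"] by (intro Max.boundedI) auto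
    ultimately show ?case by simp
  qed
qed

lemma has_derivative_difference_quotient_at_right:
  fixes \<phi> :: "'a::real_normed_vector \<Rightarrow> real"
  assumes "(\<phi> has_derivative \<phi>') (at x)"
  shows "((\<lambda>t. (\<phi> (x + t *\<^sub>R v) - \<phi> x) / t) \<longlongrightarrow> \<phi>' v) (at_right 0)"
proof -
  have "(\<phi> \<circ> (\<lambda>t. x + t *\<^sub>R v) has_derivative \<phi>' \<circ> (\<lambda>t. t *\<^sub>R v)) (at 0)"
    using assms by (intro diff_chain_at) (auto intro!: derivative_eq_intros)
  moreover have "\<phi>' \<circ> (\<lambda>t. t *\<^sub>R v) = (\<lambda>t. \<phi>' v * t)"
    using has_derivative_bounded_linear[OF assms] by (simp add: fun_eq_iff linear_simps(5) mult.commute)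
  ultimately have "((\<lambda>t. \<phi> (x + t *\<^sub>R v)) has_field_derivative \<phi>' v) (at 0 within {0<..})"
    unfolding has_field_derivative_def by (simp add: o_def has_derivative_at_withinI)
  then show ?thesis unfolding has_field_derivative_iff by simp
qed

lemma dir_deriv_maxfun_plus:
  assumes "m \<ge> 1"
    and f_diff: "\<And>i. i \<in> {1..m} \<Longrightarrow> ((\<lambda>y. f y i) has_derivative (\<lambda>v. gradf i \<bullet> v)) (at x)"
    and g_diff: "(g has_derivative g') (at x)"
  shows "dir_deriv (\<lambda>y. maxfun f m y + g y) x v = Max ((\<lambda>i. gradf i \<bullet> v) ` active_set f m x) + g' v"
proof -
  let ?act = "active_set f m x"
  let ?M = "\<lambda>t::real. Max ((\<lambda>i. f (x + t *\<^sub>R v) i) ` ?act)"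
  have act: "finite ?act" "?act \<noteq> {}" "?act \<subseteq> {1..m}"
    using finite_active_set[of f m x] active_set_nonempty[OF \<open>m \<ge> 1\<close>, of f x]
      active_set_subset[of f m x] by auto
  have line: "((\<lambda>t::real. x + t *\<^sub>R v) \<longlongrightarrow> x) (at_right 0)"
    by (rule tendsto_eq_intros) (auto intro!: tendsto_eq_intros)
  have "((\<lambda>t. f (x + t *\<^sub>R v) i) \<longlongrightarrow> f x i) (at_right 0)" if "i \<in> {1..m}" for i
    using isCont_tendsto_compose[OF has_derivative_continuous[OF f_diff[OF that]] line] .
  then have near: "\<forall>\<^sub>F t in at_right 0. maxfun f m (x + t *\<^sub>R v) = ?M t"
    by (rule eventually_maxfun_eq_Max_active[OF \<open>m \<ge> 1\<close>])
  have "((\<lambda>t. Max ((\<lambda>i. (f (x + t *\<^sub>R v) i - f x i) / t) ` ?act)) \<longlongrightarrow> Max ((\<lambda>i. gradf i \<bullet> v) ` ?act))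
      (at_right 0)"
    using act f_diff by (intro tendsto_Max_finite has_derivative_difference_quotient_at_right) blast+
  moreover have "\<forall>\<^sub>F t in at_right 0. Max ((\<lambda>i. (f (x + t *\<^sub>R v) i - f x i) / t) ` ?act)
      = (?M t - maxfun f m x) / t"
  proof (rule eventually_at_right_less[THEN eventually_mono])
    fix t :: real assume "0 < t"
    then have "mono (\<lambda>y. (y - maxfun f m x) / t)" by (intro monoI) (simp add: divide_right_mono)
    then have "(?M t - maxfun f m x) / t = Max ((\<lambda>y. (y - maxfun f m x) / t) ` (\<lambda>i. f (x + t *\<^sub>R v) i) ` ?act)"
      using act by (intro mono_Max_commute) auto
    also have "\<dots> = Max ((\<lambda>i. (f (x + t *\<^sub>R v) i - f x i) / t) ` ?act)"
      by (rule arg_cong[where f=Max]) (auto simp: image_image active_set_maxfun[of _ f m x])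
    finally show "Max ((\<lambda>i. (f (x + t *\<^sub>R v) i - f x i) / t) ` ?act) = (?M t - maxfun f m x) / t" by simp
  qed
  ultimately have "((\<lambda>t. (?M t - maxfun f m x) / t) \<longlongrightarrow> Max ((\<lambda>i. gradf i \<bullet> v) ` ?act)) (at_right 0)"
    by (rule Lim_transform_eventually)
  then have "((\<lambda>t. (?M t - maxfun f m x) / t + (g (x + t *\<^sub>R v) - g x) / t)
      \<longlongrightarrow> Max ((\<lambda>i. gradf i \<bullet> v) ` ?act) + g' v) (at_right 0)"
    by (intro tendsto_add has_derivative_difference_quotient_at_right g_diff)
  moreover have "\<forall>\<^sub>F t in at_right 0. (?M t - maxfun f m x) / t + (g (x + t *\<^sub>R v) - g x) / t
      = ((maxfun f m (x + t *\<^sub>R v) + g (x + t *\<^sub>R v)) - (maxfun f m x + g x)) / t"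
    using near by eventually_elim (simp add: diff_divide_distrib add_divide_distrib)
  ultimately have "((\<lambda>t. ((maxfun f m (x + t *\<^sub>R v) + g (x + t *\<^sub>R v)) - (maxfun f m x + g x)) / t)
      \<longlongrightarrow> Max ((\<lambda>i. gradf i \<bullet> v) ` ?act) + g' v) (at_right 0)"
    by (rule Lim_transform_eventually)
  then show ?thesis unfolding dir_deriv_def by (intro tendsto_Lim) auto
qed

section \<open>The second-order necessary condition\<close>

lemma tendsto_zero_if_tendsto_zero_over_square:
  fixes X :: "nat \<Rightarrow> 'c::real_normed_vector"
  assumes "(\<lambda>n. X n /\<^sub>R (T n)^2) \<longlonglongrightarrow> 0" "T \<longlonglongrightarrow> 0" "\<And>n. T n \<noteq> 0"
  shows "X \<longlonglongrightarrow> 0"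
proof -
  have "(\<lambda>n. (T n)^2 *\<^sub>R (X n /\<^sub>R (T n)^2)) \<longlonglongrightarrow> 0^2 *\<^sub>R 0"
    by (intro tendsto_intros assms)
  moreover have "(\<lambda>n. (T n)^2 *\<^sub>R (X n /\<^sub>R (T n)^2)) = X"
    using assms(3) by (simp add: fun_eq_iff)
  ultimately show ?thesis by simp
qed

lemma second_order_tangent_setD:
  assumes "w \<in> second_order_tangent_set S y v" "S \<noteq> {}"
  obtains T s where "\<And>n. T n > 0" "T \<longlonglongrightarrow> 0" "\<And>n. s n \<in> S" "s \<longlonglongrightarrow> y"
    "(\<lambda>n. (y + T n *\<^sub>R v + ((T n)^2 / 2) *\<^sub>R w - s n) /\<^sub>R (T n)^2) \<longlonglongrightarrow> 0"
proof -
  obtain T where T: "\<And>n. T n > 0" "T \<longlonglongrightarrow> 0"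
    and dist_lim: "(\<lambda>n. infdist (y + T n *\<^sub>R v + ((T n)^2 / 2) *\<^sub>R w) S / (T n)^2) \<longlonglongrightarrow> 0"
    using assms(1) unfolding second_order_tangent_set_def by blast
  define p where "p n = y + T n *\<^sub>R v + ((T n)^2 / 2) *\<^sub>R w" for n
  have "\<exists>s\<in>S. dist (p n) s < infdist (p n) S + (T n)^3" for n
  proof -
    have "Inf ((\<lambda>s. dist (p n) s) ` S) < infdist (p n) S + (T n)^3"
      using T(1)[of n] infdist_notempty[OF assms(2), of "p n"] by simp
    then obtain d where "d \<in> (\<lambda>s. dist (p n) s) ` S" "d < infdist (p n) S + (T n)^3"
      using cInf_lessD[of "(\<lambda>s. dist (p n) s) ` S"] assms(2) by blast
    then show ?thesis by blast
  qed
  then obtain s where s: "\<And>n. s n \<in> S" "\<And>n. dist (p n) (s n) < infdist (p n) S + (T n)^3"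
    by metis
  have ps: "(\<lambda>n. (p n - s n) /\<^sub>R (T n)^2) \<longlonglongrightarrow> 0"
  proof (rule Lim_null_comparison)
    show "\<forall>\<^sub>F n in sequentially. norm ((p n - s n) /\<^sub>R (T n)^2) \<le> infdist (p n) S / (T n)^2 + T n"
    proof (intro always_eventually allI)
      fix n
      have Tn: "T n > 0" by (rule T(1))
      have "norm ((p n - s n) /\<^sub>R (T n)^2) = dist (p n) (s n) / (T n)^2"
        by (simp add: dist_norm divide_inverse_commute)
      also have "\<dots> \<le> (infdist (p n) S + (T n)^3) / (T n)^2"
        using s(2)[of n] Tn by (intro divide_right_mono) auto
      also have "\<dots> = infdist (p n) S / (T n)^2 + T n"
        using Tn by (simp add: add_divide_distrib power2_eq_square power3_eq_cube)
      finally show "norm ((p n - s n) /\<^sub>R (T n)^2) \<le> infdist (p n) S / (T n)^2 + T n" .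
    qed
    show "(\<lambda>n. infdist (p n) S / (T n)^2 + T n) \<longlonglongrightarrow> 0"
      using tendsto_add[OF dist_lim T(2)] unfolding p_def by simp
  qed
  have "(\<lambda>n. p n - s n) \<longlonglongrightarrow> 0"
    using tendsto_zero_if_tendsto_zero_over_square[OF ps T(2)] T(1) less_irrefl by metis
  moreover have "p \<longlonglongrightarrow> y + 0 *\<^sub>R v + (0^2 / 2) *\<^sub>R w"
    unfolding p_def by (intro tendsto_intros T(2)) simp_all
  ultimately have "(\<lambda>n. p n - (p n - s n)) \<longlonglongrightarrow> y - 0"
    by (intro tendsto_diff) simp_all
  then have "s \<longlonglongrightarrow> y" by simp
  from T s(1) this ps show ?thesis unfolding p_def by (rule that)
qed

locale minimax_program =
  fixes A :: "'a::euclidean_space set"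
    and K :: "'b::banach set"
    and m :: nat
    and f :: "'a \<Rightarrow> nat \<Rightarrow> real"
    and gradf :: "nat \<Rightarrow> 'a \<Rightarrow> 'a"
    and Hf :: "nat \<Rightarrow> 'a \<Rightarrow> 'a \<Rightarrow>\<^sub>L 'a"
    and G :: "'a \<Rightarrow> 'b"
    and DG :: "'a \<Rightarrow> 'a \<Rightarrow>\<^sub>L 'b"
    and D2G :: "'a \<Rightarrow> 'a \<Rightarrow>\<^sub>L 'a \<Rightarrow>\<^sub>L 'b"
    and xs :: 'a
  assumes K_ne: "K \<noteq> {}" and K_closed: "closed K" and K_convex: "convex K" and K_cone: "cone K"
    and m_pos: "m \<ge> 1"
    and f_diff: "\<And>i x. i \<in> {1..m} \<Longrightarrow> ((\<lambda>y. f y i) has_derivative (\<lambda>v. gradf i x \<bullet> v)) (at x)"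
    and G_diff: "\<And>x. (G has_derivative blinfun_apply (DG x)) (at x)"
    and DG_cont: "isCont DG xs"
    and DG_diff: "(DG has_derivative blinfun_apply (D2G xs)) (at xs)"
    and gradf_diff: "\<And>i. i \<in> {1..m} \<Longrightarrow> (gradf i has_derivative blinfun_apply (Hf i xs)) (at xs)"
    and xs_int: "xs \<in> interior A"
    and xs_feas: "G xs \<in> K"
    and xs_locmin: "\<exists>\<epsilon>>0. \<forall>x\<in>A. G x \<in> K \<longrightarrow> dist x xs < \<epsilon> \<longrightarrow> maxfun f m xs \<le> maxfun f m x"
    and RCQ: "0 \<in> interior {G xs + blinfun_apply (DG xs) (a - xs) - k | a k. a \<in> A \<and> k \<in> K}"
begin

abbreviation "act \<equiv> active_set f m xs"

definition hess_form :: "'a \<Rightarrow> nat \<Rightarrow> real" where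
  "hess_form h i = h \<bullet> blinfun_apply (Hf i xs) h"

lemma act: "finite act" "act \<noteq> {}" "act \<subseteq> {1..m}"
  using finite_active_set[of f m xs] active_set_nonempty[OF m_pos, of f xs] active_set_subset[of f m xs]
  by auto

lemma openness_at_xs:
  "\<exists>M>0. \<forall>y. \<exists>e k s. y = blinfun_apply (DG xs) e - k + s *\<^sub>R G xs \<and> k \<in> K \<and>
     norm e \<le> M * norm y \<and> \<bar>s\<bar> \<le> M * norm y"
proof (rule robinson_openness[OF K_closed K_convex K_cone K_ne])
  have "{G xs + blinfun_apply (DG xs) (a - xs) - k | a k. a \<in> A \<and> k \<in> K}
      \<subseteq> {G xs + blinfun_apply (DG xs) e - k | e k. k \<in> K}"
    by blast
  then show "0 \<in> interior {G xs + blinfun_apply (DG xs) e - k | e k. k \<in> K}"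
    using RCQ interior_mono by blast
qed

lemma feasible_correction:
  assumes T: "\<And>n. T n > 0" "T \<longlonglongrightarrow> 0"
    and xn: "xn \<longlonglongrightarrow> xs" and zn: "zn \<longlonglongrightarrow> G xs" "\<forall>\<^sub>F n in sequentially. zn n \<in> K"
    and residual: "(\<lambda>n. (G (xn n) - zn n) /\<^sub>R (T n)^2) \<longlonglongrightarrow> 0"
  shows "\<exists>en. (\<lambda>n. en n /\<^sub>R (T n)^2) \<longlonglongrightarrow> 0 \<and> (\<forall>\<^sub>F n in sequentially. G (xn n + en n) \<in> K)"
proof -
  obtain M where M: "M > 0" and opn: "\<forall>y. \<exists>e k s. y = blinfun_apply (DG xs) e - k + s *\<^sub>R G xs \<and>
      k \<in> K \<and> norm e \<le> M * norm y \<and> \<bar>s\<bar> \<le> M * norm y"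
    using openness_at_xs by blast
  obtain \<rho> where \<rho>: "\<rho> > 0" and regular: "\<And>x z. norm (x - xs) < \<rho> \<Longrightarrow> z \<in> K \<Longrightarrow>
      norm (z - G xs) < \<rho> \<Longrightarrow> norm (G x - z) < \<rho> \<Longrightarrow> \<exists>x'. G x' \<in> K \<and> norm (x' - x) \<le> 2 * M * norm (G x - z)"
    using metric_regularity[OF K_closed K_convex K_cone xs_feas G_diff DG_cont M opn] by blast
  have "T n \<noteq> 0" for n using T(1)[of n] by simp
  then have "(\<lambda>n. G (xn n) - zn n) \<longlonglongrightarrow> 0"
    by (rule tendsto_zero_if_tendsto_zero_over_square[OF residual T(2)])
  then have "(\<lambda>n. norm (G (xn n) - zn n)) \<longlonglongrightarrow> 0" by (rule tendsto_norm_zero)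
  then have "\<forall>\<^sub>F n in sequentially. norm (G (xn n) - zn n) < \<rho>" using \<rho> by (rule order_tendstoD(2))
  moreover have "\<forall>\<^sub>F n in sequentially. norm (xn n - xs) < \<rho>"
    using xn \<rho> by (intro order_tendstoD(2)) (auto intro: tendsto_norm_zero LIM_zero)
  moreover have "\<forall>\<^sub>F n in sequentially. norm (zn n - G xs) < \<rho>"
    using zn(1) \<rho> by (intro order_tendstoD(2)) (auto intro: tendsto_norm_zero LIM_zero)
  ultimately have "\<forall>\<^sub>F n in sequentially. \<exists>x'. G x' \<in> K \<and> norm (x' - xn n) \<le> 2 * M * norm (G (xn n) - zn n)"
    using zn(2) by eventually_elim (blast intro: regular)
  then obtain N where N: "\<And>n. n \<ge> N \<Longrightarrow>
      \<exists>x'. G x' \<in> K \<and> norm (x' - xn n) \<le> 2 * M * norm (G (xn n) - zn n)"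
    unfolding eventually_sequentially by blast
  define en where "en n = (if n \<ge> N then (SOME x'. G x' \<in> K \<and> norm (x' - xn n) \<le> 2 * M * norm (G (xn n) - zn n)) - xn n
      else 0)" for n
  have en: "G (xn n + en n) \<in> K \<and> norm (en n) \<le> 2 * M * norm (G (xn n) - zn n)" if "n \<ge> N" for n
    using someI_ex[OF N[OF that]] that by (simp add: en_def)
  have "(\<lambda>n. en n /\<^sub>R (T n)^2) \<longlonglongrightarrow> 0"
  proof (rule Lim_null_comparison)
    show "\<forall>\<^sub>F n in sequentially. norm (en n /\<^sub>R (T n)^2) \<le> 2 * M * norm ((G (xn n) - zn n) /\<^sub>R (T n)^2)"
      unfolding eventually_sequentially
    proof (intro exI allI impI)
      fix n assume "n \<ge> N"
      with en have "norm (en n) / (T n)^2 \<le> 2 * M * norm (G (xn n) - zn n) / (T n)^2"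
        by (intro divide_right_mono) auto
      then show "norm (en n /\<^sub>R (T n)^2) \<le> 2 * M * norm ((G (xn n) - zn n) /\<^sub>R (T n)^2)"
        by (simp add: divide_inverse_commute ac_simps)
    qed
    show "(\<lambda>n. 2 * M * norm ((G (xn n) - zn n) /\<^sub>R (T n)^2)) \<longlonglongrightarrow> 0"
      using tendsto_mult_right_zero[OF tendsto_norm_zero[OF residual], of "2 * M"] by simp
  qed
  moreover have "\<forall>\<^sub>F n in sequentially. G (xn n + en n) \<in> K"
    unfolding eventually_sequentially using en by blast
  ultimately show ?thesis by blast
qed

lemma taylor_G_at_xs:
  assumes "\<epsilon> > 0"
  shows "\<exists>\<delta>>0. \<forall>v. norm v < \<delta> \<longrightarrow>
    norm (G (xs + v) - G xs - blinfun_apply (DG xs) v - (1/2) *\<^sub>R blinfun_apply (blinfun_apply (D2G xs) v) v)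
      \<le> \<epsilon> * (norm v)^2"
proof (rule taylor_second_order[where r=1 and D="\<lambda>x. blinfun_apply (DG x)"
      and B="\<lambda>u v. blinfun_apply (blinfun_apply (D2G xs) u) v", OF _ _ _ _ assms])
  show "\<And>x. x \<in> ball xs 1 \<Longrightarrow> (G has_derivative blinfun_apply (DG x)) (at x)" using G_diff by blast
  show "\<And>s u v. blinfun_apply (blinfun_apply (D2G xs) (s *\<^sub>R u)) v
      = s *\<^sub>R blinfun_apply (blinfun_apply (D2G xs) u) v"
    by (simp add: blinfun.scaleR_right blinfun.scaleR_left)
  fix \<epsilon>' :: real assume "\<epsilon>' > 0"
  then obtain d where d: "d > 0" "\<And>y. norm (y - xs) < d \<Longrightarrow>
      norm (DG y - DG xs - blinfun_apply (D2G xs) (y - xs)) \<le> \<epsilon>' * norm (y - xs)"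
    using DG_diff unfolding has_derivative_at_alt by blast
  show "\<exists>\<delta>>0. \<forall>u v. norm u < \<delta> \<longrightarrow> norm (blinfun_apply (DG (xs + u)) v - blinfun_apply (DG xs) v
      - blinfun_apply (blinfun_apply (D2G xs) u) v) \<le> \<epsilon>' * norm u * norm v"
  proof (intro exI[of _ d] conjI allI impI d(1))
    fix u v :: 'a assume "norm u < d"
    have "norm (blinfun_apply (DG (xs + u)) v - blinfun_apply (DG xs) v - blinfun_apply (blinfun_apply (D2G xs) u) v)
        = norm (blinfun_apply (DG (xs + u) - DG xs - blinfun_apply (D2G xs) u) v)"
      by (simp add: blinfun.diff_left)
    also have "\<dots> \<le> norm (DG (xs + u) - DG xs - blinfun_apply (D2G xs) u) * norm v" by (rule norm_blinfun)
    also have "\<dots> \<le> \<epsilon>' * norm u * norm v"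
      using d(2)[of "xs + u"] \<open>norm u < d\<close> by (simp add: mult_right_mono)
    finally show "norm (blinfun_apply (DG (xs + u)) v - blinfun_apply (DG xs) v
        - blinfun_apply (blinfun_apply (D2G xs) u) v) \<le> \<epsilon>' * norm u * norm v" .
  qed
qed simp

lemma taylor_f_at_xs:
  assumes i: "i \<in> {1..m}" and "\<epsilon> > 0"
  shows "\<exists>\<delta>>0. \<forall>v. norm v < \<delta> \<longrightarrow>
    norm (f (xs + v) i - f xs i - gradf i xs \<bullet> v - (1/2) *\<^sub>R (blinfun_apply (Hf i xs) v \<bullet> v))
      \<le> \<epsilon> * (norm v)^2"
proof (rule taylor_second_order[where \<phi>="\<lambda>y. f y i" and r=1 and D="\<lambda>x v. gradf i x \<bullet> v"
      and B="\<lambda>u v. blinfun_apply (Hf i xs) u \<bullet> v", OF _ _ _ _ assms(2)])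
  show "\<And>x. x \<in> ball xs 1 \<Longrightarrow> ((\<lambda>y. f y i) has_derivative (\<lambda>v. gradf i x \<bullet> v)) (at x)"
    using f_diff[OF i] by blast
  show "\<And>s u v. blinfun_apply (Hf i xs) (s *\<^sub>R u) \<bullet> v = s *\<^sub>R (blinfun_apply (Hf i xs) u \<bullet> v)"
    by (simp add: blinfun.scaleR_right)
  fix \<epsilon>' :: real assume "\<epsilon>' > 0"
  then obtain d where d: "d > 0" "\<And>y. norm (y - xs) < d \<Longrightarrow>
      norm (gradf i y - gradf i xs - blinfun_apply (Hf i xs) (y - xs)) \<le> \<epsilon>' * norm (y - xs)"
    using gradf_diff[OF i] unfolding has_derivative_at_alt by blast
  show "\<exists>\<delta>>0. \<forall>u v. norm u < \<delta> \<longrightarrow>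
      norm (gradf i (xs + u) \<bullet> v - gradf i xs \<bullet> v - blinfun_apply (Hf i xs) u \<bullet> v) \<le> \<epsilon>' * norm u * norm v"
  proof (intro exI[of _ d] conjI allI impI d(1))
    fix u v :: 'a assume "norm u < d"
    have "norm (gradf i (xs + u) \<bullet> v - gradf i xs \<bullet> v - blinfun_apply (Hf i xs) u \<bullet> v)
        = \<bar>(gradf i (xs + u) - gradf i xs - blinfun_apply (Hf i xs) u) \<bullet> v\<bar>"
      by (simp add: inner_diff_left)
    also have "\<dots> \<le> norm (gradf i (xs + u) - gradf i xs - blinfun_apply (Hf i xs) u) * norm v"
      by (rule Cauchy_Schwarz_ineq2)
    also have "\<dots> \<le> \<epsilon>' * norm u * norm v"
      using d(2)[of "xs + u"] \<open>norm u < d\<close> by (simp add: mult_right_mono)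
    finally show "norm (gradf i (xs + u) \<bullet> v - gradf i xs \<bullet> v - blinfun_apply (Hf i xs) u \<bullet> v)
        \<le> \<epsilon>' * norm u * norm v" .
  qed
qed simp_all

text \<open>The points \<open>kn \<in> K\<close> follow the arc \<open>G xs + t DG(xs) h + t\<^sup>2/2 w\<close> up to \<open>o(t\<^sup>2)\<close>.
  Replacing them by \<open>(1 + s t\<^sup>2/2) kn + t\<^sup>2/2 k \<in> K\<close> adds, up to \<open>o(t\<^sup>2)\<close>, the term
  \<open>t\<^sup>2/2 (k + s G xs) = t\<^sup>2/2 (DG(xs) d + D\<^sup>2G(xs)(h,h) - w)\<close>, which turns the arc into the
  second-order expansion of \<open>G\<close> along \<open>xs + t h + t\<^sup>2/2 d\<close>.\<close>
lemma second_order_arc_residual: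
  assumes T: "\<And>n. T n > 0" "T \<longlonglongrightarrow> 0" and kn: "kn \<longlonglongrightarrow> G xs"
    and near: "(\<lambda>n. (G xs + T n *\<^sub>R blinfun_apply (DG xs) h + ((T n)^2 / 2) *\<^sub>R w - kn n) /\<^sub>R (T n)^2) \<longlonglongrightarrow> 0"
    and rep: "blinfun_apply (DG xs) d + blinfun_apply (blinfun_apply (D2G xs) h) h - w = k + s *\<^sub>R G xs"
  shows "(\<lambda>n. (G (xs + (T n *\<^sub>R h + ((T n)^2/2) *\<^sub>R d))
      - ((1 + s * (T n)^2 / 2) *\<^sub>R kn n + ((T n)^2/2) *\<^sub>R k)) /\<^sub>R (T n)^2) \<longlonglongrightarrow> 0"
proof -
  let ?Q = "blinfun_apply (blinfun_apply (D2G xs) h) h"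
  have expansion: "(\<lambda>n. (G (xs + (T n *\<^sub>R h + ((T n)^2/2) *\<^sub>R d + 0)) - G xs - T n *\<^sub>R blinfun_apply (DG xs) h
      - ((T n)^2/2) *\<^sub>R (blinfun_apply (DG xs) d + ?Q)) /\<^sub>R (T n)^2) \<longlonglongrightarrow> 0"
    by (rule taylor_second_order_along_parabola[where B="\<lambda>u v. blinfun_apply (blinfun_apply (D2G xs) u) v"])
      (auto intro: taylor_G_at_xs T blinfun.bounded_linear_right
        bounded_bilinear.comp1[OF bounded_bilinear_blinfun_apply])
  have "(\<lambda>n. (G (xs + (T n *\<^sub>R h + ((T n)^2/2) *\<^sub>R d + 0)) - G xs - T n *\<^sub>R blinfun_apply (DG xs) h
      - ((T n)^2/2) *\<^sub>R (blinfun_apply (DG xs) d + ?Q)) /\<^sub>R (T n)^2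
      + (G xs + T n *\<^sub>R blinfun_apply (DG xs) h + ((T n)^2 / 2) *\<^sub>R w - kn n) /\<^sub>R (T n)^2
      + (s / 2) *\<^sub>R (G xs - kn n)) \<longlonglongrightarrow> 0 + 0 + (s / 2) *\<^sub>R (G xs - G xs)"
    by (intro tendsto_intros expansion near kn)
  moreover have "(G (xs + (T n *\<^sub>R h + ((T n)^2/2) *\<^sub>R d + 0)) - G xs - T n *\<^sub>R blinfun_apply (DG xs) h
      - ((T n)^2/2) *\<^sub>R (blinfun_apply (DG xs) d + ?Q)) /\<^sub>R (T n)^2
      + (G xs + T n *\<^sub>R blinfun_apply (DG xs) h + ((T n)^2 / 2) *\<^sub>R w - kn n) /\<^sub>R (T n)^2
      + (s / 2) *\<^sub>R (G xs - kn n)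
    = (G (xs + (T n *\<^sub>R h + ((T n)^2/2) *\<^sub>R d))
      - ((1 + s * (T n)^2 / 2) *\<^sub>R kn n + ((T n)^2/2) *\<^sub>R k)) /\<^sub>R (T n)^2" for n
  proof -
    have Tn: "T n \<noteq> 0" using T(1)[of n] by simp
    have "blinfun_apply (DG xs) d + ?Q = w + k + s *\<^sub>R G xs" using rep by (simp add: algebra_simps)
    then have "G (xs + (T n *\<^sub>R h + ((T n)^2/2) *\<^sub>R d)) - ((1 + s * (T n)^2 / 2) *\<^sub>R kn n + ((T n)^2/2) *\<^sub>R k)
      = (G (xs + (T n *\<^sub>R h + ((T n)^2/2) *\<^sub>R d + 0)) - G xs - T n *\<^sub>R blinfun_apply (DG xs) h
          - ((T n)^2/2) *\<^sub>R (blinfun_apply (DG xs) d + ?Q))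
        + (G xs + T n *\<^sub>R blinfun_apply (DG xs) h + ((T n)^2 / 2) *\<^sub>R w - kn n)
        + ((T n)^2 * s / 2) *\<^sub>R (G xs - kn n)"
      by (simp add: algebra_simps)
    moreover have "((T n)^2 * s / 2) *\<^sub>R (G xs - kn n) /\<^sub>R (T n)^2 = (s / 2) *\<^sub>R (G xs - kn n)"
      using Tn by simp
    ultimately show ?thesis by (simp only: scaleR_add_right)
  qed
  ultimately show ?thesis by simp
qed

lemma active_index_descent:
  assumes i: "i \<in> act" and crit: "gradf i xs \<bullet> h \<le> 0"
    and no_ascent: "gradf i xs \<bullet> h = 0 \<Longrightarrow> gradf i xs \<bullet> d + hess_form h i < 0"
    and T: "\<And>n. T n > 0" "T \<longlonglongrightarrow> 0" and en: "(\<lambda>n. en n /\<^sub>R (T n)^2) \<longlonglongrightarrow> 0"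
  shows "\<forall>\<^sub>F n in sequentially. f (xs + (T n *\<^sub>R h + ((T n)^2/2) *\<^sub>R d + en n)) i < maxfun f m xs"
proof -
  define x' where "x' n = xs + (T n *\<^sub>R h + ((T n)^2/2) *\<^sub>R d + en n)" for n
  have i_range: "i \<in> {1..m}" using i act(3) by blast
  define a where "a = gradf i xs \<bullet> h"
  define c where "c = gradf i xs \<bullet> d + hess_form h i"
  define \<Phi> where "\<Phi> n = (f (x' n) i - f xs i - T n *\<^sub>R (gradf i xs \<bullet> h)
      - ((T n)^2/2) *\<^sub>R (gradf i xs \<bullet> d + hess_form h i)) /\<^sub>R (T n)^2" for n
  have "\<Phi> \<longlonglongrightarrow> 0"
    unfolding \<Phi>_def x'_def hess_form_def
    using taylor_second_order_along_parabola[of "\<lambda>v. gradf i xs \<bullet> v"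
        "\<lambda>u v. blinfun_apply (Hf i xs) u \<bullet> v" "\<lambda>y. f y i", OF bounded_linear_inner_right
        bounded_bilinear.comp1[OF bounded_bilinear_inner blinfun.bounded_linear_right]
        taylor_f_at_xs[OF i_range] T en]
    by (simp add: inner_commute)
  have decomp: "f (x' n) i - maxfun f m xs = (T n)^2 * \<Phi> n + T n * a + (T n)^2 * c / 2" for n
    using T(1)[of n] active_set_maxfun[OF i]
    by (simp add: \<Phi>_def a_def c_def field_simps)
  have "\<forall>\<^sub>F n in sequentially. f (x' n) i < maxfun f m xs"
  proof (cases "a = 0")
    case True
    then have "c < 0" using no_ascent unfolding a_def c_def by blast
    have "(\<lambda>n. \<Phi> n + c / 2) \<longlonglongrightarrow> 0 + c / 2" by (intro tendsto_intros \<open>\<Phi> \<longlonglongrightarrow> 0\<close>)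
    from order_tendstoD(2)[OF this, of 0] \<open>c < 0\<close>
    have "\<forall>\<^sub>F n in sequentially. \<Phi> n + c / 2 < 0" by simp
    then show ?thesis
    proof eventually_elim
      case (elim n)
      have "f (x' n) i - maxfun f m xs = (T n)^2 * (\<Phi> n + c / 2)"
        using decomp[of n] True by (simp add: algebra_simps)
      also have "\<dots> < 0" using T(1)[of n] elim by (simp add: mult_pos_neg)
      finally show ?case by simp
    qed
  next
    case False
    then have "a < 0" using crit unfolding a_def by simp
    have "(\<lambda>n. T n * \<Phi> n + a + T n * c / 2) \<longlonglongrightarrow> 0 * 0 + a + 0 * c / 2"
      by (intro tendsto_intros \<open>\<Phi> \<longlonglongrightarrow> 0\<close> T(2)) simp_all
    from order_tendstoD(2)[OF this, of 0] \<open>a < 0\<close>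
    have "\<forall>\<^sub>F n in sequentially. T n * \<Phi> n + a + T n * c / 2 < 0" by simp
    then show ?thesis
    proof eventually_elim
      case (elim n)
      have "f (x' n) i - maxfun f m xs = T n * (T n * \<Phi> n + a + T n * c / 2)"
        using decomp[of n] by (simp add: algebra_simps power2_eq_square)
      also have "\<dots> < 0" using T(1)[of n] elim by (simp add: mult_pos_neg)
      finally show ?case by simp
    qed
  qed
  then show ?thesis unfolding x'_def .
qed

lemma parabola_descent:
  assumes crit: "\<And>i. i \<in> act \<Longrightarrow> gradf i xs \<bullet> h \<le> 0"
    and no_ascent: "\<And>i. i \<in> act \<Longrightarrow> gradf i xs \<bullet> h = 0 \<Longrightarrow> gradf i xs \<bullet> d + hess_form h i < 0"
    and T: "\<And>n. T n > 0" "T \<longlonglongrightarrow> 0" and en: "(\<lambda>n. en n /\<^sub>R (T n)^2) \<longlonglongrightarrow> 0"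
  shows "\<forall>\<^sub>F n in sequentially. maxfun f m (xs + (T n *\<^sub>R h + ((T n)^2/2) *\<^sub>R d + en n)) < maxfun f m xs"
proof -
  define x' where "x' n = xs + (T n *\<^sub>R h + ((T n)^2/2) *\<^sub>R d + en n)" for n
  have "T n \<noteq> 0" for n using T(1)[of n] by simp
  then have "en \<longlonglongrightarrow> 0" by (rule tendsto_zero_if_tendsto_zero_over_square[OF en T(2)])
  then have "x' \<longlonglongrightarrow> xs + (0 *\<^sub>R h + (0^2/2) *\<^sub>R d + 0)"
    unfolding x'_def by (intro tendsto_intros T(2)) simp_all
  then have x': "x' \<longlonglongrightarrow> xs" by simp
  have "\<forall>\<^sub>F n in sequentially. f (x' n) i < maxfun f m xs" if i: "i \<in> {1..m}" for i
  proof (cases "i \<in> act")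
    case False
    have "((\<lambda>n. f (x' n) i) \<longlongrightarrow> f xs i) sequentially"
      using isCont_tendsto_compose[OF has_derivative_continuous[OF f_diff[OF i]] x'] .
    then show ?thesis using inactive_less_maxfun[OF i False] by (rule order_tendstoD(2))
  next
    case True
    then show ?thesis
      unfolding x'_def by (rule active_index_descent[OF _ crit[OF True] no_ascent[OF True] T en])
  qed
  then have "\<forall>\<^sub>F n in sequentially. \<forall>i\<in>{1..m}. f (x' n) i < maxfun f m xs"
    by (intro eventually_ball_finite) auto
  then show ?thesis
  proof eventually_elim
    case (elim n)
    obtain i where "i \<in> {1..m}" "maxfun f m (x' n) = f (x' n) i"
      using maxfun_attained[OF m_pos, of f "x' n"] by blast
    with elim show ?case unfolding x'_def by simp
  qed
qed

lemma second_order_primal: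
  assumes crit: "\<And>i. i \<in> act \<Longrightarrow> gradf i xs \<bullet> h \<le> 0"
    and w: "w \<in> second_order_tangent_set K (G xs) (blinfun_apply (DG xs) h)"
    and rep: "blinfun_apply (DG xs) d + blinfun_apply (blinfun_apply (D2G xs) h) h - w = k + s *\<^sub>R G xs"
    and k: "k \<in> K"
  shows "\<exists>i\<in>act. gradf i xs \<bullet> h = 0 \<and> gradf i xs \<bullet> d + hess_form h i \<ge> 0"
proof (rule ccontr)
  assume no_witness: "\<not> ?thesis"
  have no_ascent: "gradf i xs \<bullet> d + hess_form h i < 0" if "i \<in> act" "gradf i xs \<bullet> h = 0" for i
    using no_witness that by (meson not_le)
  obtain T kn where T: "\<And>n. T n > 0" "T \<longlonglongrightarrow> 0" and kn: "\<And>n. kn n \<in> K" "kn \<longlonglongrightarrow> G xs"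
    and near: "(\<lambda>n. (G xs + T n *\<^sub>R blinfun_apply (DG xs) h + ((T n)^2 / 2) *\<^sub>R w - kn n) /\<^sub>R (T n)^2) \<longlonglongrightarrow> 0"
    using second_order_tangent_setD[OF w K_ne] by blast
  define xn where "xn n = xs + (T n *\<^sub>R h + ((T n)^2/2) *\<^sub>R d)" for n
  define zn where "zn n = (1 + s * (T n)^2 / 2) *\<^sub>R kn n + ((T n)^2/2) *\<^sub>R k" for n
  have "xn \<longlonglongrightarrow> xs + (0 *\<^sub>R h + (0^2/2) *\<^sub>R d)"
    unfolding xn_def by (intro tendsto_intros T(2)) simp_all
  then have xn: "xn \<longlonglongrightarrow> xs" by simp
  have "zn \<longlonglongrightarrow> (1 + s * 0^2 / 2) *\<^sub>R G xs + (0^2/2) *\<^sub>R k"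
    unfolding zn_def by (intro tendsto_intros T(2) kn(2)) simp_all
  then have zn: "zn \<longlonglongrightarrow> G xs" by simp
  have "(\<lambda>n. 1 + s * (T n)^2 / 2) \<longlonglongrightarrow> 1 + s * 0^2 / 2" by (intro tendsto_intros T(2)) simp_all
  from order_tendstoD(1)[OF this, of 0]
  have "\<forall>\<^sub>F n in sequentially. 0 < 1 + s * (T n)^2 / 2" by simp
  then have zn_K: "\<forall>\<^sub>F n in sequentially. zn n \<in> K"
  proof eventually_elim
    case (elim n)
    have "(1 + s * (T n)^2 / 2) *\<^sub>R kn n \<in> K" using K_cone kn(1)[of n] elim by (simp add: mem_cone)
    moreover have "((T n)^2/2) *\<^sub>R k \<in> K" using K_cone k by (simp add: mem_cone)
    ultimately show ?case unfolding zn_def by (rule convex_cone_add_mem[OF K_convex K_cone])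
  qed
  have "(\<lambda>n. (G (xn n) - zn n) /\<^sub>R (T n)^2) \<longlonglongrightarrow> 0"
    unfolding xn_def zn_def by (rule second_order_arc_residual[OF T kn(2) near rep])
  then obtain en where en: "(\<lambda>n. en n /\<^sub>R (T n)^2) \<longlonglongrightarrow> 0"
    and feasible: "\<forall>\<^sub>F n in sequentially. G (xn n + en n) \<in> K"
    using feasible_correction[OF T xn zn zn_K] by blast
  have "T n \<noteq> 0" for n using T(1)[of n] by simp
  then have "en \<longlonglongrightarrow> 0" by (rule tendsto_zero_if_tendsto_zero_over_square[OF en T(2)])
  from tendsto_add[OF xn this] have x'_lim: "(\<lambda>n. xn n + en n) \<longlonglongrightarrow> xs" by simp
  obtain \<epsilon> where \<epsilon>: "\<epsilon> > 0" "\<And>x. x \<in> A \<Longrightarrow> G x \<in> K \<Longrightarrow> dist x xs < \<epsilon> \<Longrightarrow> maxfun f m xs \<le> maxfun f m x"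
    using xs_locmin by blast
  obtain r where r: "r > 0" "ball xs r \<subseteq> A" using xs_int by (meson mem_interior)
  have "min \<epsilon> r > 0" using \<epsilon>(1) r(1) by simp
  from tendstoD[OF x'_lim this]
  have close: "\<forall>\<^sub>F n in sequentially. dist (xn n + en n) xs < min \<epsilon> r" .
  have "\<forall>\<^sub>F n in sequentially. maxfun f m xs \<le> maxfun f m (xn n + en n)"
    using feasible close
  proof eventually_elim
    case (elim n)
    then have "xn n + en n \<in> ball xs r" by (simp add: dist_commute)
    with r(2) have "xn n + en n \<in> A" by blast
    moreover have "dist (xn n + en n) xs < \<epsilon>" using elim(2) by simp
    ultimately show ?case using \<epsilon>(2) elim(1) by blast
  qed
  moreover have "\<forall>\<^sub>F n in sequentially. maxfun f m (xn n + en n) < maxfun f m xs"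
    using parabola_descent[OF crit no_ascent T en] unfolding xn_def by (simp only: add.assoc)
  ultimately have "\<forall>\<^sub>F n in sequentially. False" by eventually_elim linarith
  then show False by simp
qed

lemma second_order_primal_cone:
  assumes crit: "\<And>i. i \<in> act \<Longrightarrow> gradf i xs \<bullet> h \<le> 0"
    and w: "w \<in> second_order_tangent_set K (G xs) (blinfun_apply (DG xs) h)"
    and t: "t \<ge> 0" and k: "k \<in> K"
    and rep: "blinfun_apply (DG xs) d + t *\<^sub>R (blinfun_apply (blinfun_apply (D2G xs) h) h - w) = k + s *\<^sub>R G xs"
  shows "max_affine act (\<lambda>i. gradf i xs) (hess_form h) d t \<ge> 0"
proof (cases "t > 0")
  case True
  have "blinfun_apply (DG xs) ((1/t) *\<^sub>R d) + blinfun_apply (blinfun_apply (D2G xs) h) h - w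
      = (1/t) *\<^sub>R k + (s / t) *\<^sub>R G xs"
    using arg_cong[OF rep, of "scaleR (1/t)"] True by (simp add: blinfun.scaleR_right algebra_simps)
  moreover have "(1/t) *\<^sub>R k \<in> K" using K_cone k True by (simp add: mem_cone)
  ultimately obtain i where i: "i \<in> act" "gradf i xs \<bullet> ((1/t) *\<^sub>R d) + hess_form h i \<ge> 0"
    using second_order_primal[OF crit w] by blast
  have "gradf i xs \<bullet> d + t * hess_form h i = t * (gradf i xs \<bullet> ((1/t) *\<^sub>R d) + hess_form h i)"
    using True by (simp add: algebra_simps)
  also have "\<dots> \<ge> 0" using i(2) True by simp
  finally show ?thesis using max_affine_ge[OF act(1) i(1), of "\<lambda>i. gradf i xs" d t "hess_form h"] by linarith
next
  case False
  with t have t0: "t = 0" by simp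
  show ?thesis
  proof (rule ccontr)
    assume "\<not> ?thesis"
    then have neg: "max_affine act (\<lambda>i. gradf i xs) (hess_form h) d 0 < 0" using t0 by simp
    define \<delta> where "\<delta> = - max_affine act (\<lambda>i. gradf i xs) (hess_form h) d 0"
    have \<delta>: "\<delta> > 0" using neg by (simp add: \<delta>_def)
    have descent: "gradf i xs \<bullet> d \<le> - \<delta>" if "i \<in> act" for i
      using max_affine_ge[OF act(1) that, of "\<lambda>i. gradf i xs" d 0 "hess_form h"] by (simp add: \<delta>_def)
    obtain M where "\<forall>y. \<exists>e k s. y = blinfun_apply (DG xs) e - k + s *\<^sub>R G xs \<and> k \<in> K \<and>
        norm e \<le> M * norm y \<and> \<bar>s\<bar> \<le> M * norm y"
      using openness_at_xs by blast
    then obtain e k1 s1 where e: "w - blinfun_apply (blinfun_apply (D2G xs) h) h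
        = blinfun_apply (DG xs) e - k1 + s1 *\<^sub>R G xs" "k1 \<in> K"
      by blast
    define S where "S = (\<Sum>i\<in>act. \<bar>gradf i xs \<bullet> e + hess_form h i\<bar>)"
    define c where "c = (1 + S) / \<delta>"
    have c: "c > 0" using \<delta> by (simp add: c_def S_def add_pos_nonneg sum_nonneg)
    have "blinfun_apply (DG xs) (e + c *\<^sub>R d) + blinfun_apply (blinfun_apply (D2G xs) h) h - w
        = (k1 + c *\<^sub>R k) + (c * s - s1) *\<^sub>R G xs"
      using e(1) rep t0 by (simp add: blinfun.add_right blinfun.scaleR_right algebra_simps)
    moreover have "k1 + c *\<^sub>R k \<in> K"
      using convex_cone_add_mem[OF K_convex K_cone e(2)] K_cone k c by (simp add: mem_cone)
    ultimately obtain i where i: "i \<in> act" "gradf i xs \<bullet> (e + c *\<^sub>R d) + hess_form h i \<ge> 0"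
      using second_order_primal[OF crit w] by blast
    have "gradf i xs \<bullet> (e + c *\<^sub>R d) + hess_form h i = (gradf i xs \<bullet> e + hess_form h i) + c * (gradf i xs \<bullet> d)"
      by (simp add: inner_add_right algebra_simps)
    also have "\<dots> \<le> S + c * (- \<delta>)"
    proof (rule add_mono)
      show "gradf i xs \<bullet> e + hess_form h i \<le> S" unfolding S_def
        using member_le_sum[OF i(1), of "\<lambda>i. \<bar>gradf i xs \<bullet> e + hess_form h i\<bar>"] act(1) by auto
      show "c * (gradf i xs \<bullet> d) \<le> c * (- \<delta>)" using mult_left_mono[OF descent[OF i(1)], of c] c by simp
    qed
    also have "\<dots> = -1" using \<delta> by (simp add: c_def)
    finally show False using i(2) by simp
  qed
qed

lemma dir_deriv_nonneg_if_stationary_combination: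
  assumes \<alpha>: "\<forall>i\<in>act. 0 \<le> \<alpha> i" "sum \<alpha> act = 1"
    and stationary: "\<And>v. (\<Sum>i\<in>act. \<alpha> i *\<^sub>R gradf i xs) \<bullet> v + blinfun_apply lam (blinfun_apply (DG xs) v) = 0"
  shows "dir_deriv (\<lambda>x. maxfun f m x + blinfun_apply lam (G x)) xs v \<ge> 0"
proof -
  have "((\<lambda>x. blinfun_apply lam (G x)) has_derivative (\<lambda>v. blinfun_apply lam (blinfun_apply (DG xs) v))) (at xs)"
    using bounded_linear.has_derivative[OF blinfun.bounded_linear_right G_diff[of xs]] .
  then have formula: "dir_deriv (\<lambda>x. maxfun f m x + blinfun_apply lam (G x)) xs v
      = Max ((\<lambda>i. gradf i xs \<bullet> v) ` act) + blinfun_apply lam (blinfun_apply (DG xs) v)"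
    using f_diff by (intro dir_deriv_maxfun_plus[OF m_pos]) auto
  have "(\<Sum>i\<in>act. \<alpha> i *\<^sub>R gradf i xs) \<bullet> v = (\<Sum>i\<in>act. \<alpha> i * (gradf i xs \<bullet> v))"
    by (simp add: inner_sum_left)
  also have "\<dots> \<le> (\<Sum>i\<in>act. \<alpha> i * Max ((\<lambda>i. gradf i xs \<bullet> v) ` act))"
    using \<alpha>(1) act(1) by (intro sum_mono mult_left_mono) auto
  also have "\<dots> = Max ((\<lambda>i. gradf i xs \<bullet> v) ` act)" using \<alpha>(2) by (simp add: sum_distrib_right[symmetric])
  finally show ?thesis using stationary[of v] formula by linarith
qed

context
  fixes h :: 'a and w :: 'b
  assumes crit: "\<And>i. i \<in> act \<Longrightarrow> gradf i xs \<bullet> h \<le> 0"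
    and w: "w \<in> second_order_tangent_set K (G xs) (blinfun_apply (DG xs) h)"
begin

text \<open>\<open>primal_value y\<close> is the value of the second-order problem linearised at \<open>xs\<close> with right-hand
  side \<open>y\<close>; by \<open>second_order_primal_cone\<close> it is finite, and it is sublinear in \<open>y\<close>.\<close>
definition primal_values :: "'b \<Rightarrow> real set" where
  "primal_values y = {max_affine act (\<lambda>i. gradf i xs) (hess_form h) d t | d t k s. t \<ge> 0 \<and> k \<in> K \<and>
      y = blinfun_apply (DG xs) d + t *\<^sub>R (blinfun_apply (blinfun_apply (D2G xs) h) h - w) - (k + s *\<^sub>R G xs)}"

definition primal_value :: "'b \<Rightarrow> real" where
  "primal_value y = Inf (primal_values y)"

lemma primal_valuesI:
  "t \<ge> 0 \<Longrightarrow> k \<in> K \<Longrightarrow>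
    y = blinfun_apply (DG xs) d + t *\<^sub>R (blinfun_apply (blinfun_apply (D2G xs) h) h - w) - (k + s *\<^sub>R G xs) \<Longrightarrow>
    max_affine act (\<lambda>i. gradf i xs) (hess_form h) d t \<in> primal_values y"
  unfolding primal_values_def by blast

lemma primal_values_add:
  assumes "v1 \<in> primal_values y1" "v2 \<in> primal_values y2"
  shows "\<exists>v\<in>primal_values (y1 + y2). v \<le> v1 + v2"
proof -
  obtain d1 t1 k1 s1 where 1: "v1 = max_affine act (\<lambda>i. gradf i xs) (hess_form h) d1 t1" "t1 \<ge> 0" "k1 \<in> K"
    "y1 = blinfun_apply (DG xs) d1 + t1 *\<^sub>R (blinfun_apply (blinfun_apply (D2G xs) h) h - w) - (k1 + s1 *\<^sub>R G xs)"
    using assms(1) unfolding primal_values_def by blast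
  obtain d2 t2 k2 s2 where 2: "v2 = max_affine act (\<lambda>i. gradf i xs) (hess_form h) d2 t2" "t2 \<ge> 0" "k2 \<in> K"
    "y2 = blinfun_apply (DG xs) d2 + t2 *\<^sub>R (blinfun_apply (blinfun_apply (D2G xs) h) h - w) - (k2 + s2 *\<^sub>R G xs)"
    using assms(2) unfolding primal_values_def by blast
  have "max_affine act (\<lambda>i. gradf i xs) (hess_form h) (d1 + d2) (t1 + t2) \<in> primal_values (y1 + y2)"
  proof (rule primal_valuesI[where k="k1 + k2" and s="s1 + s2"])
    show "0 \<le> t1 + t2" using 1 2 by simp
    show "k1 + k2 \<in> K" using convex_cone_add_mem[OF K_convex K_cone 1(3) 2(3)] .
    show "y1 + y2 = blinfun_apply (DG xs) (d1 + d2)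
        + (t1 + t2) *\<^sub>R (blinfun_apply (blinfun_apply (D2G xs) h) h - w) - (k1 + k2 + (s1 + s2) *\<^sub>R G xs)"
      unfolding 1(4) 2(4) by (simp add: blinfun.add_right algebra_simps)
  qed
  then show ?thesis using max_affine_add_le[OF act(1,2)] 1(1) 2(1) by blast
qed

lemma primal_values_scale:
  assumes "c > 0" "v \<in> primal_values y"
  shows "c * v \<in> primal_values (c *\<^sub>R y)"
proof -
  obtain d t k s where d: "v = max_affine act (\<lambda>i. gradf i xs) (hess_form h) d t" "t \<ge> 0" "k \<in> K"
    "y = blinfun_apply (DG xs) d + t *\<^sub>R (blinfun_apply (blinfun_apply (D2G xs) h) h - w) - (k + s *\<^sub>R G xs)"
    using assms(2) unfolding primal_values_def by blast
  have "max_affine act (\<lambda>i. gradf i xs) (hess_form h) (c *\<^sub>R d) (c * t) \<in> primal_values (c *\<^sub>R y)"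
  proof (rule primal_valuesI[where k="c *\<^sub>R k" and s="c * s"])
    show "0 \<le> c * t" using assms(1) d(2) by simp
    show "c *\<^sub>R k \<in> K" using K_cone d(3) assms(1) by (simp add: mem_cone)
    show "c *\<^sub>R y = blinfun_apply (DG xs) (c *\<^sub>R d)
        + (c * t) *\<^sub>R (blinfun_apply (blinfun_apply (D2G xs) h) h - w) - (c *\<^sub>R k + (c * s) *\<^sub>R G xs)"
      unfolding d(4) by (simp add: blinfun.scaleR_right algebra_simps)
  qed
  with d(1) show ?thesis by (simp add: max_affine_scale[OF act(1,2) assms(1)])
qed

lemma primal_values_norm_bound: "\<exists>C. \<forall>y. \<exists>v\<in>primal_values y. v \<le> C * norm y"
proof -
  obtain M where opn: "\<forall>y. \<exists>e k s. y = blinfun_apply (DG xs) e - k + s *\<^sub>R G xs \<and> k \<in> K \<and>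
      norm e \<le> M * norm y \<and> \<bar>s\<bar> \<le> M * norm y"
    using openness_at_xs by blast
  define C where "C = (\<Sum>i\<in>act. norm (gradf i xs)) * M"
  have "\<exists>v\<in>primal_values y. v \<le> C * norm y" for y
  proof -
    obtain e k s where e: "y = blinfun_apply (DG xs) e - k + s *\<^sub>R G xs" "k \<in> K" "norm e \<le> M * norm y"
      using opn by blast
    have "max_affine act (\<lambda>i. gradf i xs) (hess_form h) e 0 \<in> primal_values y"
      using e by (intro primal_valuesI[of 0 k y e "- s"]) auto
    moreover have "max_affine act (\<lambda>i. gradf i xs) (hess_form h) e 0 \<le> C * norm y"
      using max_affine_le_norm[OF act(1,2), of "\<lambda>i. gradf i xs" "hess_form h" e]
        mult_left_mono[OF e(3), of "\<Sum>i\<in>act. norm (gradf i xs)"]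
      by (simp add: C_def sum_nonneg mult.assoc)
    ultimately show ?thesis by blast
  qed
  then show ?thesis by blast
qed

lemma primal_values_opposite_nonneg:
  assumes "v \<in> primal_values y" "v' \<in> primal_values (- y)"
  shows "0 \<le> v + v'"
proof -
  obtain v0 where v0: "v0 \<in> primal_values (y + - y)" "v0 \<le> v + v'"
    using primal_values_add[OF assms] by blast
  then obtain d t k s where d: "v0 = max_affine act (\<lambda>i. gradf i xs) (hess_form h) d t" "t \<ge> 0" "k \<in> K"
    "0 = blinfun_apply (DG xs) d + t *\<^sub>R (blinfun_apply (blinfun_apply (D2G xs) h) h - w) - (k + s *\<^sub>R G xs)"
    unfolding primal_values_def by auto
  from d(4) have "blinfun_apply (DG xs) d + t *\<^sub>R (blinfun_apply (blinfun_apply (D2G xs) h) h - w)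
      = k + s *\<^sub>R G xs"
    by (simp add: eq_commute[of 0])
  from second_order_primal_cone[OF crit w d(2,3) this] have "v0 \<ge> 0" unfolding d(1) .
  with v0(2) show ?thesis by simp
qed

lemma primal_values_nonempty: "primal_values y \<noteq> {}"
  using primal_values_norm_bound by blast

lemma bdd_below_primal_values: "bdd_below (primal_values y)"
proof -
  obtain v' where "v' \<in> primal_values (- y)" using primal_values_nonempty by blast
  then show ?thesis
    unfolding bdd_below_def using primal_values_opposite_nonneg by (intro exI[of _ "- v'"]) force
qed

lemma primal_value_le: "v \<in> primal_values y \<Longrightarrow> primal_value y \<le> v"
  unfolding primal_value_def by (rule cInf_lower[OF _ bdd_below_primal_values])

lemma primal_value_greatest: "(\<And>v. v \<in> primal_values y \<Longrightarrow> c \<le> v) \<Longrightarrow> c \<le> primal_value y"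
  unfolding primal_value_def using primal_values_nonempty by (rule cInf_greatest)

lemma primal_value_subadditive: "primal_value (y1 + y2) \<le> primal_value y1 + primal_value y2"
proof -
  have "primal_value (y1 + y2) - v2 \<le> primal_value y1" if v2: "v2 \<in> primal_values y2" for v2
  proof (rule primal_value_greatest)
    fix v1 assume "v1 \<in> primal_values y1"
    then obtain v where "v \<in> primal_values (y1 + y2)" "v \<le> v1 + v2"
      using primal_values_add v2 by blast
    then show "primal_value (y1 + y2) - v2 \<le> v1" using primal_value_le by fastforce
  qed
  then have "primal_value (y1 + y2) - primal_value y1 \<le> primal_value y2"
    by (intro primal_value_greatest) fastforce
  then show ?thesis by simp
qed

lemma primal_value_scale:
  assumes "c > 0"
  shows "primal_value (c *\<^sub>R y) = c * primal_value y"
proof (rule antisym)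
  have "primal_value (c *\<^sub>R y) / c \<le> primal_value y"
  proof (rule primal_value_greatest)
    fix v assume "v \<in> primal_values y"
    then have "primal_value (c *\<^sub>R y) \<le> c * v" by (intro primal_value_le primal_values_scale assms)
    then show "primal_value (c *\<^sub>R y) / c \<le> v" using assms by (simp add: pos_divide_le_eq mult.commute)
  qed
  then show "primal_value (c *\<^sub>R y) \<le> c * primal_value y" using assms by (simp add: divide_le_eq mult.commute)
next
  show "c * primal_value y \<le> primal_value (c *\<^sub>R y)"
  proof (rule primal_value_greatest)
    fix v assume "v \<in> primal_values (c *\<^sub>R y)"
    then have "(1/c) * v \<in> primal_values ((1/c) *\<^sub>R (c *\<^sub>R y))" using assms by (intro primal_values_scale) simp_all
    then have "primal_value y \<le> (1/c) * v" using assms by (intro primal_value_le) simp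
    then show "c * primal_value y \<le> v" using assms by (simp add: field_simps)
  qed
qed

lemma second_order_dual:
  obtains lam \<alpha> where "lam \<in> polar_cone K" "blinfun_apply lam (G xs) = 0"
    "\<forall>i\<in>act. 0 \<le> \<alpha> i" "sum \<alpha> act = 1"
    "\<And>v. (\<Sum>i\<in>act. \<alpha> i *\<^sub>R gradf i xs) \<bullet> v + blinfun_apply lam (blinfun_apply (DG xs) v) = 0"
    "blinfun_apply lam w
      \<le> (\<Sum>i\<in>act. \<alpha> i * hess_form h i) + blinfun_apply lam (blinfun_apply (blinfun_apply (D2G xs) h) h)"
proof -
  let ?Q = "blinfun_apply (blinfun_apply (D2G xs) h) h"
  obtain \<mu> where "linear \<mu>" and \<mu>_le_value: "\<And>y. \<mu> y \<le> primal_value y"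
    using hahn_banach_sublinear[of primal_value, OF primal_value_subadditive primal_value_scale] by blast
  interpret \<mu>: linear \<mu> by fact
  have \<mu>_le: "\<mu> y \<le> v" if "v \<in> primal_values y" for v y
    using \<mu>_le_value primal_value_le[OF that] by (rule order_trans)
  have K0: "0 \<in> K" using K_cone K_ne cone_contains_0 by blast
  have \<mu>_primal: "\<mu> (blinfun_apply (DG xs) d + t *\<^sub>R (?Q - w)) \<le> max_affine act (\<lambda>i. gradf i xs) (hess_form h) d t"
    if "t \<ge> 0" for d t
    by (rule \<mu>_le, rule primal_valuesI[of t 0 _ d 0]) (use that K0 in auto)
  have \<mu>_cone: "\<mu> (k + s *\<^sub>R G xs) \<ge> 0" if "k \<in> K" for k s
  proof -
    have "max_affine act (\<lambda>i. gradf i xs) (hess_form h) 0 0 \<in> primal_values (- (k + s *\<^sub>R G xs))"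
      by (rule primal_valuesI[of 0 k _ 0 s]) (use that in auto)
    from \<mu>_le[OF this] have "\<mu> (- (k + s *\<^sub>R G xs)) \<le> 0" by (simp add: max_affine_zero[OF act(1,2)])
    then show ?thesis using \<mu>.neg[of "k + s *\<^sub>R G xs"] by simp
  qed
  have \<mu>_G: "\<mu> (G xs) = 0" using \<mu>_cone[OF K0, of 1] \<mu>_cone[OF K0, of "-1"] by (simp add: \<mu>.neg)
  obtain C where "\<forall>y. \<exists>v\<in>primal_values y. v \<le> C * norm y" using primal_values_norm_bound by blast
  then have \<mu>_bound: "\<mu> y \<le> C * norm y" for y using \<mu>_le by (meson order_trans)
  have "bounded_linear (\<lambda>y. - \<mu> y)"
  proof (rule bounded_linear_intro[where K=C])
    show "- \<mu> (x + y) = - \<mu> x + - \<mu> y" for x y by (simp add: \<mu>.add)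
    show "- \<mu> (r *\<^sub>R x) = r *\<^sub>R - \<mu> x" for r x by (simp add: \<mu>.scale)
    show "norm (- \<mu> x) \<le> norm x * C" for x
      using \<mu>_bound[of x] \<mu>_bound[of "- x"] by (simp add: \<mu>.neg abs_le_iff mult.commute)
  qed
  define lam where "lam = Blinfun (\<lambda>y. - \<mu> y)"
  have lam: "blinfun_apply lam y = - \<mu> y" for y
    unfolding lam_def using \<open>bounded_linear (\<lambda>y. - \<mu> y)\<close> by (simp add: bounded_linear_Blinfun_apply)
  define u where "u = (\<Sum>b\<in>Basis. \<mu> (blinfun_apply (DG xs) b) *\<^sub>R b)"
  have \<mu>_DG: "\<mu> (blinfun_apply (DG xs) d) = u \<bullet> d" for d
  proof -
    have "\<mu> (blinfun_apply (DG xs) d) = \<mu> (blinfun_apply (DG xs) (\<Sum>b\<in>Basis. (d \<bullet> b) *\<^sub>R b))"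
      by (simp add: euclidean_representation)
    also have "\<dots> = (\<Sum>b\<in>Basis. (d \<bullet> b) * \<mu> (blinfun_apply (DG xs) b))"
      by (simp add: blinfun.sum_right blinfun.scaleR_right \<mu>.sum \<mu>.scale)
    also have "\<dots> = u \<bullet> d" unfolding u_def by (simp add: inner_sum_right inner_commute mult.commute)
    finally show ?thesis .
  qed
  have "u \<bullet> d + t * \<mu> (?Q - w) \<le> max_affine act (\<lambda>i. gradf i xs) (hess_form h) d t" if "t \<ge> 0" for d t
    using \<mu>_primal[OF that, of d] by (simp add: \<mu>.add \<mu>.scale \<mu>_DG)
  then obtain \<alpha> where \<alpha>: "\<forall>i\<in>act. \<alpha> i \<ge> 0" "sum \<alpha> act = 1" "(\<Sum>i\<in>act. \<alpha> i *\<^sub>R gradf i xs) = u"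
    "\<mu> (?Q - w) \<le> (\<Sum>i\<in>act. \<alpha> i * hess_form h i)"
    using dominated_by_max_affine_imp_convex_combination[OF act(1,2)] by blast
  show thesis
  proof (rule that[of lam \<alpha>])
    show "lam \<in> polar_cone K" unfolding polar_cone_def using \<mu>_cone[of _ 0] by (simp add: lam)
    show "blinfun_apply lam (G xs) = 0" by (simp add: lam \<mu>_G)
    show "(\<Sum>i\<in>act. \<alpha> i *\<^sub>R gradf i xs) \<bullet> v + blinfun_apply lam (blinfun_apply (DG xs) v) = 0" for v
      by (simp add: \<alpha>(3) lam \<mu>_DG)
    show "blinfun_apply lam w \<le> (\<Sum>i\<in>act. \<alpha> i * hess_form h i) + blinfun_apply lam ?Q"
      using \<alpha>(4) by (simp add: lam \<mu>.diff)
  qed (use \<alpha> in auto)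
qed

end

lemma second_order_condition_unique_multiplier:
  assumes crit: "\<And>i. i \<in> act \<Longrightarrow> gradf i xs \<bullet> h \<le> 0"
    and w: "w \<in> second_order_tangent_set K (G xs) (blinfun_apply (DG xs) h)"
    and unique: "{lam \<in> polar_cone K. blinfun_apply lam (G xs) = 0 \<and>
        (\<forall>v\<in>contingent_cone A xs. dir_deriv (\<lambda>x. maxfun f m x + blinfun_apply lam (G x)) xs v \<ge> 0)} = {lams}"
  shows "ereal (blinfun_apply lams w) \<le> (SUP \<alpha>\<in>{\<alpha>::nat \<Rightarrow> real.
             (\<forall>i. \<alpha> i \<ge> 0) \<and> (\<forall>i. i \<notin> act \<longrightarrow> \<alpha> i = 0) \<and> (\<Sum>i\<in>{1..m}. \<alpha> i) = 1 \<and>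
             (\<forall>v\<in>contingent_cone A xs.
                (\<Sum>i\<in>{1..m}. \<alpha> i *\<^sub>R gradf i xs) \<bullet> v + blinfun_apply lams (blinfun_apply (DG xs) v) \<ge> 0)}.
           ereal ((\<Sum>i\<in>{1..m}. \<alpha> i * (h \<bullet> blinfun_apply (Hf i xs) h))
                  + blinfun_apply lams (blinfun_apply (blinfun_apply (D2G xs) h) h)))"
proof -
  obtain lam \<alpha> where lam: "lam \<in> polar_cone K" "blinfun_apply lam (G xs) = 0"
    and \<alpha>: "\<forall>i\<in>act. 0 \<le> \<alpha> i" "sum \<alpha> act = 1"
    and stationary: "\<And>v. (\<Sum>i\<in>act. \<alpha> i *\<^sub>R gradf i xs) \<bullet> v + blinfun_apply lam (blinfun_apply (DG xs) v) = 0"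
    and bound: "blinfun_apply lam w
      \<le> (\<Sum>i\<in>act. \<alpha> i * hess_form h i) + blinfun_apply lam (blinfun_apply (blinfun_apply (D2G xs) h) h)"
    using second_order_dual[OF crit w] by blast
  have "lam = lams"
    using unique lam dir_deriv_nonneg_if_stationary_combination[OF \<alpha> stationary] by blast
  define \<alpha>' where "\<alpha>' i = (if i \<in> act then \<alpha> i else 0)" for i
  have on_act: "(\<Sum>i\<in>{1..m}. \<alpha>' i * g i) = (\<Sum>i\<in>act. \<alpha> i * g i)" for g :: "nat \<Rightarrow> real"
    using act(3) by (simp add: \<alpha>'_def if_distrib[of "\<lambda>c. c * _"] sum.If_cases Int_absorb1 cong: if_cong)
  have on_act_vec: "(\<Sum>i\<in>{1..m}. \<alpha>' i *\<^sub>R gradf i xs) = (\<Sum>i\<in>act. \<alpha> i *\<^sub>R gradf i xs)"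
    using act(3) by (simp add: \<alpha>'_def if_distrib[of "\<lambda>c. c *\<^sub>R _"] sum.If_cases Int_absorb1 cong: if_cong)
  show ?thesis
  proof (rule SUP_upper2[of \<alpha>'], intro CollectI conjI allI impI ballI)
    show "0 \<le> \<alpha>' i" for i using \<alpha>(1) by (simp add: \<alpha>'_def)
    show "i \<notin> act \<Longrightarrow> \<alpha>' i = 0" for i by (simp add: \<alpha>'_def)
    show "(\<Sum>i\<in>{1..m}. \<alpha>' i) = 1" using on_act[of "\<lambda>_. 1"] \<alpha>(2) by simp
    show "0 \<le> (\<Sum>i\<in>{1..m}. \<alpha>' i *\<^sub>R gradf i xs) \<bullet> v + blinfun_apply lams (blinfun_apply (DG xs) v)" for v
      using stationary[of v] unfolding on_act_vec \<open>lam = lams\<close> by simp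
    show "ereal (blinfun_apply lams w) \<le> ereal ((\<Sum>i\<in>{1..m}. \<alpha>' i * (h \<bullet> blinfun_apply (Hf i xs) h))
        + blinfun_apply lams (blinfun_apply (blinfun_apply (D2G xs) h) h))"
      using bound unfolding on_act \<open>lam = lams\<close> hess_form_def by simp
  qed
qed

end

theorem corollary2:
  fixes A :: "'a::euclidean_space set"
    and K :: "'b::banach set"
    and m :: nat
    and f :: "'a \<Rightarrow> nat \<Rightarrow> real"
    and gradf :: "nat \<Rightarrow> 'a \<Rightarrow> 'a"
    and Hf :: "nat \<Rightarrow> 'a \<Rightarrow> 'a \<Rightarrow>\<^sub>L 'a"
    and G :: "'a \<Rightarrow> 'b"
    and DG :: "'a \<Rightarrow> 'a \<Rightarrow>\<^sub>L 'b"
    and D2G :: "'a \<Rightarrow> 'a \<Rightarrow>\<^sub>L 'a \<Rightarrow>\<^sub>L 'b"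
    and xs :: 'a
    and lams :: "'b \<Rightarrow>\<^sub>L real"
    and h :: 'a
  assumes A_ne: "A \<noteq> {}" and A_closed: "closed A" and A_convex: "convex A"
    and K_ne: "K \<noteq> {}" and K_closed: "closed K" and K_convex: "convex K" and K_cone: "cone K"
    and m_pos: "m \<ge> 1"
    \<comment> \<open>each f_i differentiable, with gradient gradf i\<close>
    and f_diff: "\<And>i x. i \<in> {1..m} \<Longrightarrow> ((\<lambda>y. f y i) has_derivative (\<lambda>v. gradf i x \<bullet> v)) (at x)"
    \<comment> \<open>G continuously Frechet differentiable, with derivative DG\<close>
    and G_diff: "\<And>x. (G has_derivative blinfun_apply (DG x)) (at x)"
    and DG_cont: "continuous_on UNIV DG"
    \<comment> \<open>twice continuous differentiability of G and of each f_i near xs\<close>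
    and C2_near: "\<exists>r>0.
        (\<forall>x\<in>ball xs r. (DG has_derivative blinfun_apply (D2G x)) (at x)) \<and>
        continuous_on (ball xs r) D2G \<and>
        (\<forall>i\<in>{1..m}. (\<forall>x\<in>ball xs r. (gradf i has_derivative blinfun_apply (Hf i x)) (at x)) \<and>
           continuous_on (ball xs r) (Hf i))"
    \<comment> \<open>xs is an interior locally optimal solution of (P)\<close>
    and xs_int: "xs \<in> interior A"
    and xs_feas: "G xs \<in> K"
    and xs_locmin: "\<exists>\<epsilon>>0. \<forall>x\<in>A. G x \<in> K \<longrightarrow> dist x xs < \<epsilon> \<longrightarrow> maxfun f m xs \<le> maxfun f m x"
    \<comment> \<open>Robinson's constraint qualification\<close>
    and RCQ: "0 \<in> interior {G xs + blinfun_apply (DG xs) (a - xs) - k | a k. a \<in> A \<and> k \<in> K}"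
    \<comment> \<open>uniqueness of the Lagrange multiplier\<close>
    and lams_K: "lams \<in> polar_cone K"
    and Lambda_single: "{lam \<in> polar_cone K. blinfun_apply lam (G xs) = 0 \<and>
        (\<forall>v\<in>contingent_cone A xs.
           dir_deriv (\<lambda>x. maxfun f m x + blinfun_apply lam (G x)) xs v \<ge> 0)} = {lams}"
    \<comment> \<open>h in the critical cone C(xs)\<close>
    and h_crit: "h \<in> contingent_cone A xs"
      "blinfun_apply (DG xs) h \<in> contingent_cone K (G xs)"
      "Max ((\<lambda>i. gradf i xs \<bullet> h) ` active_set f m xs) \<le> 0"
  shows "support_fun lams (second_order_tangent_set K (G xs) (blinfun_apply (DG xs) h))
      \<le> (SUP \<alpha>\<in>{\<alpha>::nat \<Rightarrow> real.
             (\<forall>i. \<alpha> i \<ge> 0) \<and> (\<forall>i. i \<notin> active_set f m xs \<longrightarrow> \<alpha> i = 0) \<and>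
             (\<Sum>i\<in>{1..m}. \<alpha> i) = 1 \<and>
             (\<forall>v\<in>contingent_cone A xs.
                (\<Sum>i\<in>{1..m}. \<alpha> i *\<^sub>R gradf i xs) \<bullet> v + blinfun_apply lams (blinfun_apply (DG xs) v) \<ge> 0)}.
           ereal ((\<Sum>i\<in>{1..m}. \<alpha> i * (h \<bullet> blinfun_apply (Hf i xs) h))
                  + blinfun_apply lams (blinfun_apply (blinfun_apply (D2G xs) h) h)))"
proof -
  obtain r where "r > 0" "\<forall>x\<in>ball xs r. (DG has_derivative blinfun_apply (D2G x)) (at x)"
    "\<forall>i\<in>{1..m}. \<forall>x\<in>ball xs r. (gradf i has_derivative blinfun_apply (Hf i x)) (at x)"
    using C2_near by blast
  then have "(DG has_derivative blinfun_apply (D2G xs)) (at xs)"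
    "\<And>i. i \<in> {1..m} \<Longrightarrow> (gradf i has_derivative blinfun_apply (Hf i xs)) (at xs)"
    by simp_all
  moreover have "isCont DG xs" using DG_cont by (simp add: continuous_on_eq_continuous_at)
  ultimately interpret minimax_program A K m f gradf Hf G DG D2G xs
    using K_ne K_closed K_convex K_cone m_pos f_diff G_diff xs_int xs_feas xs_locmin RCQ
    by unfold_locales
  have crit: "gradf i xs \<bullet> h \<le> 0" if "i \<in> act" for i
  proof -
    have "gradf i xs \<bullet> h \<le> Max ((\<lambda>i. gradf i xs \<bullet> h) ` act)" using act(1) that by (intro Max_ge) auto
    with h_crit(3) show ?thesis by linarith
  qed
  show ?thesis
    unfolding support_fun_def
    by (rule SUP_least, rule second_order_condition_unique_multiplier[OF crit _ Lambda_single])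
qed

end
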